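(* In the abstract boundary problem setting described in the context, let $A$ be a self-adjoint operator in $H_0$ with $T\subset A\subset T^*$, $\mathcal D(A)=\operatorname{Ker}\gamma_0$, and such that $A$ has a bounded everywhere defined inverse. Then $\Gamma_0$ restricts to a topological isomorphism $\operatorname{Ker}T^*\to K'$, and $T^*\oplus\Gamma_0:\mathcal D(T^* )\to H_0\oplus K'$ is a topological isomorphism (with the graph topology on $\mathcal D(T^* )$).
   Context: Inner products are linear in the first argument and conjugate-linear in the second. Let $H_0$ be a separable Hilbert space with inner product $\langle\cdot,\cdot\rangle$, let $T$ be a closed densely defined symmetric operator in $H_0$ with adjoint $T^*$, and equip $\mathcal D(T^* )$ with the graph norm. Let $H_1\subset H_0$ be a dense subspace which is a Hilbert space in its own right with bounded inclusion $H_1\to H_0$. Let $K^\partial$ be a separable Hilbert space with inner product $\langle\cdot,\cdot\rangle_\partial$ and $K\subset K^\partial$ a dense subspace which is a Hilbert space in its own right with bounded inclusion. Let $K'$ be the space of continuous anti-linear functionals on $K$ (a Hilbert space with the dual norm); $K^\partial$ is regarded as a dense subspace of $K'$ via $y\mapsto(x\mapsto\langle y,x\rangle_\partial)$, so $K\subset K^\partial\subset K'$. For $y\in K'$, $x\in K$ put $\langle y,x\rangle_{K',K}=y(x)$ and $\langle x,y\rangle_{K,K'}=\overline{y(x)}$; these agree with $\langle\cdot,\cdot\rangle_\partial$ when $y\in K^\partial$. Standing assumptions: $H_1\subset\mathcal D(T^* )$ and $H_1$ is dense in $\mathcal D(T^* )$ in the graph norm; $T^*|_{H_1}:H_1\to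 H_0$ is bounded; $\gamma_0,\gamma_1:H_1\to K$ are bounded linear operators such that $\gamma=\gamma_0\oplus\gamma_1:H_1\to K\oplus K$ is surjective; $\operatorname{Ker}\gamma$ is dense in $H_0$ and $\mathcal D(T)=\operatorname{Ker}\gamma$; and the Lagrange identity $\langle T^*u,v\rangle-\langle u,T^*v\rangle=\langle\gamma_1u,\gamma_0v\rangle_\partial-\langle\gamma_0u,\gamma_1v\rangle_\partial$ holds for all $u,v\in H_1$. $\Gamma_0,\Gamma_1:\mathcal D(T^* )\to K'$ denote the (existing, unique) continuous extensions of $\gamma_0,\gamma_1$; they satisfy $\langle T^*u,v\rangle-\langle u,T^*v\rangle=\langle\Gamma_1u,\Gamma_0v\rangle_{K',K}-\langle\Gamma_0u,\Gamma_1v\rangle_{K',K}$ for $u\in\mathcal D(T^* )$, $v\in H_1$. *)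

theory Defs
  imports "HOL-Analysis.Analysis"
begin

text \<open>HOL has no complex vector spaces; we introduce a class of complex inner product
spaces (inner product linear in the first, conjugate-linear in the second argument),
whose norm is the one induced by the inner product. A complex Hilbert space is then
a type of class \<open>{complex_inner, complete_space}\<close>.\<close>

class complex_inner = real_normed_vector +
  fixes scaleC :: "complex \<Rightarrow> 'a \<Rightarrow> 'a" (infixr "*\<^sub>C" 75)
    and cinner :: "'a \<Rightarrow> 'a \<Rightarrow> complex"
  assumes scaleC_of_real: "scaleC (complex_of_real r) x = scaleR r x"
    and scaleC_add_right: "scaleC a (x + y) = scaleC a x + scaleC a y"
    and scaleC_add_left: "scaleC (a + b) x = scaleC a x + scaleC b x"
    and scaleC_scaleC: "scaleC a (scaleC b x) = scaleC (a * b) x"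
    and scaleC_one: "scaleC 1 x = x"
    and cinner_add_left: "cinner (x + y) z = cinner x z + cinner y z"
    and cinner_scaleC_left: "cinner (scaleC a x) y = a * cinner x y"
    and cinner_commute: "cinner y x = cnj (cinner x y)"
    and cinner_pos: "x \<noteq> 0 \<Longrightarrow> 0 < Re (cinner x x)"
    and norm_cinner: "norm x = sqrt (Re (cinner x x))"

definition csubspace :: "'a::complex_inner set \<Rightarrow> bool" where
  "csubspace S \<longleftrightarrow> 0 \<in> S \<and> (\<forall>x\<in>S. \<forall>y\<in>S. x + y \<in> S) \<and> (\<forall>c. \<forall>x\<in>S. c *\<^sub>C x \<in> S)"

definition ip_norm :: "('a \<Rightarrow> 'a \<Rightarrow> complex) \<Rightarrow> 'a \<Rightarrow> real" where
  "ip_norm ip x = sqrt (Re (ip x x))"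

text \<open>\<open>V\<close> is a complex subspace which is a Hilbert space in its own right with
inner product \<open>ip\<close> (only its values on \<open>V\<close> matter).\<close>
definition own_hilbert :: "'a::complex_inner set \<Rightarrow> ('a \<Rightarrow> 'a \<Rightarrow> complex) \<Rightarrow> bool" where
  "own_hilbert V ip \<longleftrightarrow> csubspace V
     \<and> (\<forall>x\<in>V. \<forall>y\<in>V. \<forall>z\<in>V. ip (x + y) z = ip x z + ip y z)
     \<and> (\<forall>c. \<forall>x\<in>V. \<forall>y\<in>V. ip (c *\<^sub>C x) y = c * ip x y)
     \<and> (\<forall>x\<in>V. \<forall>y\<in>V. ip y x = cnj (ip x y))
     \<and> (\<forall>x\<in>V. x \<noteq> 0 \<longrightarrow> 0 < Re (ip x x))
     \<and> (\<forall>X. (\<forall>n. X n \<in> V) \<and>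
             (\<forall>e>0. \<exists>N. \<forall>m\<ge>N. \<forall>n\<ge>N. ip_norm ip (X m - X n) < e)
          \<longrightarrow> (\<exists>l\<in>V. (\<lambda>n. ip_norm ip (X n - l)) \<longlonglongrightarrow> 0))"

definition lin_on :: "'a::complex_inner set \<Rightarrow> ('a \<Rightarrow> 'b::complex_inner) \<Rightarrow> bool" where
  "lin_on D f \<longleftrightarrow> csubspace D \<and> (\<forall>x\<in>D. \<forall>y\<in>D. f (x + y) = f x + f y)
     \<and> (\<forall>c. \<forall>x\<in>D. f (c *\<^sub>C x) = c *\<^sub>C f x)"

text \<open>An operator is a pair (domain \<open>D\<close>, map \<open>T\<close>); the map is only relevant on \<open>D\<close>.\<close>

definition adj_dom :: "'a::complex_inner set \<Rightarrow> ('a \<Rightarrow> 'a) \<Rightarrow> 'a set" where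
  "adj_dom D T = {v. \<exists>w. \<forall>u\<in>D. cinner (T u) v = cinner u w}"

definition adj :: "'a::complex_inner set \<Rightarrow> ('a \<Rightarrow> 'a) \<Rightarrow> 'a \<Rightarrow> 'a" where
  "adj D T v = (SOME w. \<forall>u\<in>D. cinner (T u) v = cinner u w)"

definition closed_op :: "'a::complex_inner set \<Rightarrow> ('a \<Rightarrow> 'a) \<Rightarrow> bool" where
  "closed_op D T \<longleftrightarrow> closed {(u, T u) | u. u \<in> D}"

definition symmetric_op :: "'a::complex_inner set \<Rightarrow> ('a \<Rightarrow> 'a) \<Rightarrow> bool" where
  "symmetric_op D T \<longleftrightarrow> (\<forall>u\<in>D. \<forall>v\<in>D. cinner (T u) v = cinner u (T v))"

definition self_adjoint_op :: "'a::complex_inner set \<Rightarrow> ('a \<Rightarrow> 'a) \<Rightarrow> bool" where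
  "self_adjoint_op D T \<longleftrightarrow> lin_on D T \<and> closure D = UNIV \<and>
     adj_dom D T = D \<and> (\<forall>u\<in>D. adj D T u = T u)"

definition op_le :: "'a set \<Rightarrow> ('a \<Rightarrow> 'b) \<Rightarrow> 'a set \<Rightarrow> ('a \<Rightarrow> 'b) \<Rightarrow> bool" where
  "op_le DS S DR R \<longleftrightarrow> DS \<subseteq> DR \<and> (\<forall>u\<in>DS. S u = R u)"

definition graph_norm :: "'a::complex_inner set \<Rightarrow> ('a \<Rightarrow> 'a) \<Rightarrow> 'a \<Rightarrow> real" where
  "graph_norm D T v = sqrt ((norm v)\<^sup>2 + (norm (adj D T v))\<^sup>2)"

text \<open>Elements of \<open>K'\<close> are represented by functions \<open>'k \<Rightarrow> complex\<close> that are
antilinear and bounded on \<open>K\<close> (w.r.t. the \<open>K\<close>-norm) and vanish outside \<open>K\<close>.\<close>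
definition antidual :: "'k::complex_inner set \<Rightarrow> ('k \<Rightarrow> 'k \<Rightarrow> complex) \<Rightarrow> ('k \<Rightarrow> complex) set" where
  "antidual K ipK = {f. (\<forall>x\<in>K. \<forall>y\<in>K. f (x + y) = f x + f y)
     \<and> (\<forall>c. \<forall>x\<in>K. f (c *\<^sub>C x) = cnj c * f x)
     \<and> (\<exists>C. \<forall>x\<in>K. cmod (f x) \<le> C * ip_norm ipK x)
     \<and> (\<forall>x. x \<notin> K \<longrightarrow> f x = 0)}"

definition dual_norm :: "'k::complex_inner set \<Rightarrow> ('k \<Rightarrow> 'k \<Rightarrow> complex) \<Rightarrow> ('k \<Rightarrow> complex) \<Rightarrow> real" where
  "dual_norm K ipK f = (SUP x\<in>{x\<in>K. ip_norm ipK x \<le> 1}. cmod (f x))"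

text \<open>The embedding \<open>K\<^sup>\<partial> \<rightarrow> K'\<close>, \<open>y \<mapsto> (x \<mapsto> \<langle>y,x\<rangle>\<^sub>\<partial>)\<close>.\<close>
definition emb :: "'k::complex_inner set \<Rightarrow> 'k \<Rightarrow> ('k \<Rightarrow> complex)" where
  "emb K y = (\<lambda>x. if x \<in> K then cinner y x else 0)"

definition top_iso :: "('a \<Rightarrow> 'b) \<Rightarrow> 'a set \<Rightarrow> 'b set \<Rightarrow> ('a \<Rightarrow> real) \<Rightarrow> ('b \<Rightarrow> real) \<Rightarrow> bool" where
  "top_iso f X Y nX nY \<longleftrightarrow> bij_betw f X Y
     \<and> (\<exists>C. \<forall>x\<in>X. nY (f x) \<le> C * nX x)
     \<and> (\<exists>C. \<forall>x\<in>X. nX x \<le> C * nY (f x))"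

end

theory Submission
  imports Defs
begin

text \<open>
  Let \<open>B\<close> be the bounded inverse of the Dirichlet operator \<open>A\<close>. Since \<open>D(A) = Ker \<gamma>\<^sub>0\<close> is
  closed in \<open>H\<^sub>1\<close> and \<open>T\<^sup>*\<close> is bounded from \<open>H\<^sub>1\<close>, the open mapping theorem (Baire category plus
  successive approximation) shows that \<open>B\<close> is even bounded into \<open>H\<^sub>1\<close>, so \<open>\<gamma>\<^sub>1 B\<close> is bounded
  into \<open>K\<close>. By density of \<open>H\<^sub>1\<close> in the graph norm, the Lagrange identity extends to
  \<open>\<langle>T\<^sup>* v, u\<rangle> - \<langle>v, T\<^sup>* u\<rangle> = - \<Gamma>\<^sub>0 v (\<gamma>\<^sub>1 u)\<close> for \<open>v \<in> D(T\<^sup>*)\<close>, \<open>u \<in> D(A)\<close>; with \<open>u = B w\<close> this gives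
  \<open>\<langle>v, w\<rangle> = \<Gamma>\<^sub>0 v (\<gamma>\<^sub>1 B w)\<close> for \<open>v \<in> Ker T\<^sup>*\<close>. Taking \<open>w = v\<close> bounds \<open>\<parallel>v\<parallel>\<close> by the dual norm of
  \<open>\<Gamma>\<^sub>0 v\<close>, and conversely every \<open>\<phi> \<in> K'\<close> is \<open>\<Gamma>\<^sub>0\<close> of the Riesz representative of
  \<open>w \<mapsto> \<phi> (\<gamma>\<^sub>1 B w)\<close>, which lies in \<open>Ker T\<^sup>*\<close>. The second isomorphism follows from the
  decomposition \<open>v = B T\<^sup>* v + (v - B T\<^sup>* v)\<close> of \<open>D(T\<^sup>*)\<close> as \<open>D(A) \<oplus> Ker T\<^sup>*\<close>.
\<close>

lemma scaleC_minus_one: "(-1::complex) *\<^sub>C x = - x"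
  using scaleC_of_real[of "-1" x] by simp

lemma scaleC_zero_left [simp]: "(0::complex) *\<^sub>C x = 0"
  using scaleC_of_real[of 0 x] by simp

lemma scaleC_zero_right [simp]: "c *\<^sub>C (0::'a::complex_inner) = 0"
proof -
  have "c *\<^sub>C (0::'a) = c *\<^sub>C 0 + c *\<^sub>C 0"
    by (metis add.right_neutral scaleC_add_right)
  then show ?thesis by simp
qed

lemma scaleC_minus_left: "(- c) *\<^sub>C x = - (c *\<^sub>C (x::'a::complex_inner))"
proof -
  have "(- c) *\<^sub>C x = ((-1) * c) *\<^sub>C x" by simp
  also have "\<dots> = (-1) *\<^sub>C (c *\<^sub>C x)" by (simp only: scaleC_scaleC)
  finally show ?thesis by (simp only: scaleC_minus_one)
qed

lemma csubspace_UNIV: "csubspace UNIV"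
  unfolding csubspace_def by blast

lemma csubspace_zero: "csubspace V \<Longrightarrow> 0 \<in> V"
  and csubspace_add: "csubspace V \<Longrightarrow> x \<in> V \<Longrightarrow> y \<in> V \<Longrightarrow> x + y \<in> V"
  and csubspace_scaleC: "csubspace V \<Longrightarrow> x \<in> V \<Longrightarrow> c *\<^sub>C x \<in> V"
  unfolding csubspace_def by blast+

lemma csubspace_minus: "csubspace V \<Longrightarrow> x \<in> V \<Longrightarrow> - x \<in> V"
  using csubspace_scaleC[of V x "-1"] by (simp add: scaleC_minus_one)

lemma csubspace_diff: "csubspace V \<Longrightarrow> x \<in> V \<Longrightarrow> y \<in> V \<Longrightarrow> x - y \<in> V"
  unfolding diff_conv_add_uminus by (intro csubspace_add csubspace_minus)

lemma lin_on_add: "lin_on D f \<Longrightarrow> x \<in> D \<Longrightarrow> y \<in> D \<Longrightarrow> f (x + y) = f x + f y"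
  and lin_on_scaleC: "lin_on D f \<Longrightarrow> x \<in> D \<Longrightarrow> f (c *\<^sub>C x) = c *\<^sub>C f x"
  and lin_on_csubspace: "lin_on D f \<Longrightarrow> csubspace D"
  unfolding lin_on_def by blast+

lemma lin_on_zero: assumes "lin_on D f" shows "f 0 = 0"
  using lin_on_scaleC[OF assms csubspace_zero[OF lin_on_csubspace[OF assms]], of 0] by simp

lemma lin_on_minus: "lin_on D f \<Longrightarrow> x \<in> D \<Longrightarrow> f (- x) = - f x"
  using lin_on_scaleC[of D f x "-1"] by (simp add: scaleC_minus_one)

lemma lin_on_diff:
  assumes f: "lin_on D f" and x: "x \<in> D" and y: "y \<in> D"
  shows "f (x - y) = f x - f y"
  using lin_on_add[OF f x csubspace_minus[OF lin_on_csubspace[OF f] y]] lin_on_minus[OF f y]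
  by simp

lemma lin_on_scaleR: "lin_on D f \<Longrightarrow> x \<in> D \<Longrightarrow> f (r *\<^sub>R x) = r *\<^sub>R f x"
  using lin_on_scaleC[of D f x "complex_of_real r"] by (simp add: scaleC_of_real)

locale inner_product_on =
  fixes V :: "'a::complex_inner set" and ip :: "'a \<Rightarrow> 'a \<Rightarrow> complex"
  assumes subspace: "csubspace V"
    and add_left: "x \<in> V \<Longrightarrow> y \<in> V \<Longrightarrow> z \<in> V \<Longrightarrow> ip (x + y) z = ip x z + ip y z"
    and scaleC_left: "x \<in> V \<Longrightarrow> y \<in> V \<Longrightarrow> ip (c *\<^sub>C x) y = c * ip x y"
    and conj_sym: "x \<in> V \<Longrightarrow> y \<in> V \<Longrightarrow> ip y x = cnj (ip x y)"
    and pos: "x \<in> V \<Longrightarrow> x \<noteq> 0 \<Longrightarrow> 0 < Re (ip x x)"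
begin

abbreviation nm where "nm \<equiv> ip_norm ip"

lemma mem_zero: "0 \<in> V"
  and mem_add: "x \<in> V \<Longrightarrow> y \<in> V \<Longrightarrow> x + y \<in> V"
  and mem_diff: "x \<in> V \<Longrightarrow> y \<in> V \<Longrightarrow> x - y \<in> V"
  and mem_minus: "x \<in> V \<Longrightarrow> - x \<in> V"
  and mem_scaleC: "x \<in> V \<Longrightarrow> c *\<^sub>C x \<in> V"
  by (simp_all add: subspace csubspace_zero csubspace_add csubspace_diff csubspace_minus
      csubspace_scaleC)

lemma add_right: "x \<in> V \<Longrightarrow> y \<in> V \<Longrightarrow> z \<in> V \<Longrightarrow> ip x (y + z) = ip x y + ip x z"
  by (simp add: conj_sym[of _ x] add_left mem_add)

lemma scaleC_right: "x \<in> V \<Longrightarrow> y \<in> V \<Longrightarrow> ip x (c *\<^sub>C y) = cnj c * ip x y"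
  by (simp add: conj_sym[of _ x] scaleC_left mem_scaleC)

lemma zero_left: "y \<in> V \<Longrightarrow> ip 0 y = 0"
  using add_left[of 0 0 y] mem_zero by simp

lemma zero_right: "y \<in> V \<Longrightarrow> ip y 0 = 0"
  using conj_sym[of 0 y] zero_left mem_zero by simp

lemma diff_left: "x \<in> V \<Longrightarrow> y \<in> V \<Longrightarrow> z \<in> V \<Longrightarrow> ip (x - y) z = ip x z - ip y z"
  using add_left[of x "- y" z] scaleC_left[of y z "-1"] mem_minus
  by (simp add: scaleC_minus_one)

lemma diff_right: "x \<in> V \<Longrightarrow> y \<in> V \<Longrightarrow> z \<in> V \<Longrightarrow> ip x (y - z) = ip x y - ip x z"
  by (simp add: conj_sym[of _ x] diff_left mem_diff)

lemma self_nonneg: "x \<in> V \<Longrightarrow> 0 \<le> Re (ip x x)"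
  using pos[of x] zero_left[OF mem_zero] by (cases "x = 0") auto

lemma self_eq: "x \<in> V \<Longrightarrow> ip x x = complex_of_real ((nm x)\<^sup>2)"
  using conj_sym[of x x] self_nonneg[of x] unfolding ip_norm_def
  by (simp add: complex_eq_iff)

lemma nm_nonneg: "x \<in> V \<Longrightarrow> 0 \<le> nm x"
  unfolding ip_norm_def using self_nonneg by simp

lemma nm_sq: "x \<in> V \<Longrightarrow> (nm x)\<^sup>2 = Re (ip x x)"
  unfolding ip_norm_def using self_nonneg[of x] by simp

lemma nm_zero: "nm 0 = 0"
  unfolding ip_norm_def using zero_left mem_zero by simp

lemma nm_eq_zero_iff: "x \<in> V \<Longrightarrow> nm x = 0 \<longleftrightarrow> x = 0"
  using pos[of x] nm_zero unfolding ip_norm_def by fastforce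

lemma nm_scaleC: "x \<in> V \<Longrightarrow> nm (c *\<^sub>C x) = cmod c * nm x"
proof -
  assume x: "x \<in> V"
  have "ip (c *\<^sub>C x) (c *\<^sub>C x) = complex_of_real ((cmod c)\<^sup>2) * ip x x"
    using x complex_norm_square[of c]
    by (simp add: scaleC_left scaleC_right mem_scaleC mult.commute)
  then show ?thesis
    unfolding ip_norm_def by (simp add: real_sqrt_mult)
qed

lemma nm_scaleR: "x \<in> V \<Longrightarrow> nm (r *\<^sub>R x) = \<bar>r\<bar> * nm x"
  using nm_scaleC[of x "complex_of_real r"] by (simp add: scaleC_of_real)

lemma nm_minus: "x \<in> V \<Longrightarrow> nm (- x) = nm x"
  using nm_scaleC[of x "-1"] by (simp add: scaleC_minus_one)

lemma nm_minus_commute: "x \<in> V \<Longrightarrow> y \<in> V \<Longrightarrow> nm (x - y) = nm (y - x)"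
  using nm_minus[of "y - x"] mem_diff by simp

lemma expand: "x \<in> V \<Longrightarrow> y \<in> V \<Longrightarrow>
    ip (x + c *\<^sub>C y) (x + c *\<^sub>C y)
      = ip x x + cnj c * ip x y + c * cnj (ip x y) + c * cnj c * ip y y"
  by (simp add: add_left add_right scaleC_left scaleC_right mem_scaleC mem_add
      conj_sym[of x y] algebra_simps)

lemma cauchy_schwarz: "x \<in> V \<Longrightarrow> y \<in> V \<Longrightarrow> cmod (ip x y) \<le> nm x * nm y"
proof (cases "y = 0")
  case True
  then show "x \<in> V \<Longrightarrow> ?thesis" using zero_right nm_zero by simp
next
  case False
  assume x: "x \<in> V" and y: "y \<in> V"
  define r where "r = Re (ip y y)"
  have r: "r > 0" using pos y False r_def by simp
  have iyy: "ip y y = complex_of_real r" using self_eq[OF y] nm_sq[OF y] r_def by simp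
  define a where "a = ip x y"
  \<comment> \<open>expand \<open>0 \<le> \<parallel>x - (a/r) y\<parallel>\<^sup>2\<close>\<close>
  have "0 \<le> Re (ip (x + (- a / r) *\<^sub>C y) (x + (- a / r) *\<^sub>C y))"
    using self_nonneg mem_add mem_scaleC x y by blast
  also have "\<dots> = Re (ip x x) - (cmod a)\<^sup>2 / r"
    using r cmod_power2[of a]
    by (simp add: expand[OF x y] iyy a_def[symmetric] power2_eq_square field_simps)
  finally have "(cmod a)\<^sup>2 \<le> (nm x * nm y)\<^sup>2"
    using r by (simp add: nm_sq x y r_def power_mult_distrib field_simps)
  then show ?thesis unfolding a_def
    using nm_nonneg[OF x] nm_nonneg[OF y] by (meson mult_nonneg_nonneg power2_le_imp_le)
qed

lemma nm_triangle: "x \<in> V \<Longrightarrow> y \<in> V \<Longrightarrow> nm (x + y) \<le> nm x + nm y"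
proof -
  assume x: "x \<in> V" and y: "y \<in> V"
  have "(nm (x + y))\<^sup>2 = (nm x)\<^sup>2 + 2 * Re (ip x y) + (nm y)\<^sup>2"
    using x y by (simp add: nm_sq mem_add add_left add_right conj_sym[of x y])
  also have "\<dots> \<le> (nm x + nm y)\<^sup>2"
    using cauchy_schwarz[OF x y] complex_Re_le_cmod[of "ip x y"] by (simp add: power2_sum)
  finally show ?thesis
    using nm_nonneg[OF x] nm_nonneg[OF y] by (meson add_nonneg_nonneg power2_le_imp_le)
qed

lemma parallelogram:
  "x \<in> V \<Longrightarrow> y \<in> V \<Longrightarrow> (nm (x + y))\<^sup>2 + (nm (x - y))\<^sup>2 = 2 * (nm x)\<^sup>2 + 2 * (nm y)\<^sup>2"
  by (simp add: nm_sq mem_add mem_diff add_left add_right diff_left diff_right)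

lemma nm_triangle_diff: "x \<in> V \<Longrightarrow> y \<in> V \<Longrightarrow> nm (x - y) \<le> nm x + nm y"
  using nm_triangle[of x "- y"] nm_minus[of y] mem_minus by simp

end

lemma inner_product_on_UNIV: "inner_product_on UNIV (cinner :: 'a::complex_inner \<Rightarrow> _)"
  by unfold_locales
    (simp_all add: csubspace_UNIV cinner_add_left cinner_scaleC_left cinner_pos cinner_commute[symmetric])

lemma own_hilbert_inner_product_on: "own_hilbert V ip \<Longrightarrow> inner_product_on V ip"
  unfolding own_hilbert_def by unfold_locales blast+

lemma own_hilbert_complete:
  "own_hilbert V ip \<Longrightarrow> (\<forall>n. X n \<in> V) \<Longrightarrow>
    (\<forall>e>0. \<exists>N. \<forall>m\<ge>N. \<forall>n\<ge>N. ip_norm ip (X m - X n) < e) \<Longrightarrow>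
    \<exists>l\<in>V. (\<lambda>n. ip_norm ip (X n - l)) \<longlonglongrightarrow> 0"
  unfolding own_hilbert_def by blast

lemma norm_eq_ip_norm: "norm x = ip_norm cinner x"
  unfolding ip_norm_def by (rule norm_cinner)

lemma cinner_zero_left [simp]: "cinner 0 (y::'a::complex_inner) = 0"
  and cinner_zero_right [simp]: "cinner y 0 = 0"
  and cinner_add_right: "cinner y (z + w) = cinner y z + cinner y w"
  and cinner_diff_left: "cinner (y - z) w = cinner y w - cinner z w"
  and cinner_diff_right: "cinner y (z - w) = cinner y z - cinner y w"
  and cinner_scaleC_right: "cinner y (c *\<^sub>C z) = cnj c * cinner y z"
  and cinner_self: "cinner y y = complex_of_real ((norm y)\<^sup>2)"
  and norm_cinner_le: "cmod (cinner y z) \<le> norm y * norm z"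
  using inner_product_on.zero_left[OF inner_product_on_UNIV]
    inner_product_on.zero_right[OF inner_product_on_UNIV]
    inner_product_on.add_right[OF inner_product_on_UNIV]
    inner_product_on.diff_left[OF inner_product_on_UNIV]
    inner_product_on.diff_right[OF inner_product_on_UNIV]
    inner_product_on.scaleC_right[OF inner_product_on_UNIV]
    inner_product_on.self_eq[OF inner_product_on_UNIV]
    inner_product_on.cauchy_schwarz[OF inner_product_on_UNIV]
  by (simp_all add: norm_eq_ip_norm)

lemma parallelogram_law:
  "(norm (x + y))\<^sup>2 + (norm (x - y))\<^sup>2 = 2 * (norm x)\<^sup>2 + 2 * (norm (y::'a::complex_inner))\<^sup>2"
  using inner_product_on.parallelogram[OF inner_product_on_UNIV] by (simp add: norm_eq_ip_norm)

lemma minimizing_sequence_Cauchy: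
  fixes w :: "'h::complex_inner"
  assumes N: "csubspace N" and ns: "\<And>k. ns k \<in> N"
    and D: "\<And>m. m \<in> N \<Longrightarrow> D \<le> (norm (w - m))\<^sup>2"
    and ns_approx: "\<And>k. (norm (w - ns k))\<^sup>2 < D + inverse (real (Suc k))"
  shows "Cauchy ns"
proof (rule metric_CauchyI)
  \<comment> \<open>the midpoint of \<open>ns j\<close> and \<open>ns k\<close> lies in \<open>N\<close>, so the parallelogram law bounds their distance\<close>
  have dist_sq: "(norm (ns j - ns k))\<^sup>2 \<le> 2 * inverse (real (Suc j)) + 2 * inverse (real (Suc k))"
    for j k
  proof -
    define m where "m = (1/2) *\<^sub>R (ns j + ns k)"
    have "m \<in> N"
      unfolding m_def scaleC_of_real[symmetric] using N ns by (simp add: csubspace_add csubspace_scaleC)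
    moreover have "(w - ns j) + (w - ns k) = 2 *\<^sub>R (w - m)"
      unfolding m_def by (simp add: algebra_simps scaleR_2)
    ultimately have "4 * D \<le> (norm ((w - ns j) + (w - ns k)))\<^sup>2"
      using D[of m] by (simp add: power2_eq_square)
    moreover have "(norm (ns j - ns k))\<^sup>2
        = 2 * (norm (w - ns j))\<^sup>2 + 2 * (norm (w - ns k))\<^sup>2 - (norm ((w - ns j) + (w - ns k)))\<^sup>2"
      using parallelogram_law[of "w - ns j" "w - ns k"] by (simp add: norm_minus_commute)
    ultimately show ?thesis
      using ns_approx[of j] ns_approx[of k] by linarith
  qed
  fix e :: real
  assume e: "e > 0"
  obtain M where M: "inverse (real (Suc M)) < e\<^sup>2 / 4"
    using reals_Archimedean[of "e\<^sup>2 / 4"] e by auto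
  show "\<exists>M. \<forall>m\<ge>M. \<forall>n\<ge>M. dist (ns m) (ns n) < e"
  proof (intro exI[of _ M] allI impI)
    fix m n
    assume "m \<ge> M" "n \<ge> M"
    then have "inverse (real (Suc m)) \<le> inverse (real (Suc M))"
      and "inverse (real (Suc n)) \<le> inverse (real (Suc M))"
      by (simp_all add: field_simps)
    then have "(norm (ns m - ns n))\<^sup>2 < e\<^sup>2"
      using dist_sq[of m n] M by linarith
    then show "dist (ns m) (ns n) < e"
      using e by (simp add: dist_norm power_less_imp_less_base)
  qed
qed

lemma closed_subspace_nearest_point:
  fixes N :: "'h::{complex_inner,complete_space} set"
  assumes closed: "closed N" and N: "csubspace N"
  shows "\<exists>n\<in>N. \<forall>m\<in>N. norm (w - n) \<le> norm (w - m)"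
proof -
  define D where "D = Inf ((\<lambda>n. (norm (w - n))\<^sup>2) ` N)"
  have bdd: "bdd_below ((\<lambda>n. (norm (w - n))\<^sup>2) ` N)"
    by (rule bdd_belowI[of _ 0]) auto
  have D_le: "D \<le> (norm (w - m))\<^sup>2" if "m \<in> N" for m
    unfolding D_def using bdd that by (simp add: cInf_lower)
  have "\<exists>n\<in>N. (norm (w - n))\<^sup>2 < D + inverse (real (Suc k))" for k
  proof -
    have "Inf ((\<lambda>n. (norm (w - n))\<^sup>2) ` N) < D + inverse (real (Suc k))"
      unfolding D_def by simp
    then show ?thesis
      using csubspace_zero[OF N] by (subst (asm) cInf_less_iff) (auto simp: bdd)
  qed
  then obtain ns where ns: "\<And>k. ns k \<in> N"
    and ns_approx: "\<And>k. (norm (w - ns k))\<^sup>2 < D + inverse (real (Suc k))"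
    by metis
  obtain n where lim: "ns \<longlonglongrightarrow> n"
    using minimizing_sequence_Cauchy[OF N ns D_le ns_approx] Cauchy_convergent_iff convergent_def
    by blast
  have "n \<in> N"
    using closed ns lim closed_sequentially by blast
  moreover have "(norm (w - n))\<^sup>2 \<le> D"
  proof (rule LIMSEQ_le)
    show "(\<lambda>k. (norm (w - ns k))\<^sup>2) \<longlonglongrightarrow> (norm (w - n))\<^sup>2"
      by (intro tendsto_intros lim)
    show "(\<lambda>k. D + inverse (real (Suc k))) \<longlonglongrightarrow> D"
      using tendsto_add[OF tendsto_const LIMSEQ_inverse_real_of_nat, of D] by simp
  qed (use ns_approx less_imp_le in blast)
  ultimately show ?thesis
    using D_le by (meson norm_ge_zero order_trans power2_le_imp_le)
qed

lemma nearest_point_orthogonal: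
  fixes z x :: "'a::complex_inner"
  assumes nearest: "\<And>c. norm z \<le> norm (z - c *\<^sub>C x)"
  shows "cinner z x = 0"
proof -
  define a where "a = cinner z x"
  define s where "s = 1 / ((norm x)\<^sup>2 + 1)"
  define c where "c = complex_of_real s * a"
  have x1: "(norm x)\<^sup>2 + 1 > 0"
    by (simp add: add_nonneg_pos)
  then have s: "s > 0" "s * (norm x)\<^sup>2 \<le> 1"
    unfolding s_def by (simp_all add: field_simps)
  have aa: "a * cnj a = complex_of_real ((cmod a)\<^sup>2)"
    by (rule complex_norm_square[symmetric])
  have expand: "cinner (z + (- c) *\<^sub>C x) (z + (- c) *\<^sub>C x)
      = cinner z z + cnj (- c) * a + (- c) * cnj a + (- c) * cnj (- c) * cinner x x"
    unfolding a_def by (rule inner_product_on.expand[OF inner_product_on_UNIV]) simp_all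
  have t1: "cnj (- c) * a = - complex_of_real (s * (cmod a)\<^sup>2)"
    and t2: "(- c) * cnj a = - complex_of_real (s * (cmod a)\<^sup>2)"
    unfolding c_def using aa by (simp_all add: algebra_simps)
  have t3: "(- c) * cnj (- c) * cinner x x = complex_of_real (s\<^sup>2 * (cmod a)\<^sup>2 * (norm x)\<^sup>2)"
    unfolding c_def cinner_self using aa by (simp add: algebra_simps power2_eq_square)
  have "(norm z)\<^sup>2 \<le> (norm (z + (- c) *\<^sub>C x))\<^sup>2"
    using nearest[of c] by (simp add: scaleC_minus_left)
  also have "\<dots> = Re (cinner (z + (- c) *\<^sub>C x) (z + (- c) *\<^sub>C x))"
    by (simp only: cinner_self Re_complex_of_real)
  also have "\<dots> = (norm z)\<^sup>2 - 2 * (s * (cmod a)\<^sup>2) + s\<^sup>2 * (cmod a)\<^sup>2 * (norm x)\<^sup>2"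
    unfolding expand t1 t2 t3 by (simp add: cinner_self)
  finally have "2 * (s * (cmod a)\<^sup>2) \<le> s * (s * (norm x)\<^sup>2) * (cmod a)\<^sup>2"
    by (simp add: power2_eq_square algebra_simps)
  also have "\<dots> \<le> s * 1 * (cmod a)\<^sup>2"
    using s by (intro mult_right_mono mult_left_mono) auto
  finally have "(cmod a)\<^sup>2 \<le> 0"
    using s by (simp add: mult_le_0_iff)
  then show ?thesis
    unfolding a_def by simp
qed

lemma bounded_antilinear_kernel:
  fixes l :: "'a::complex_inner \<Rightarrow> complex"
  assumes add: "\<And>x y. l (x + y) = l x + l y"
    and scaleC: "\<And>c x. l (c *\<^sub>C x) = cnj c * l x"
    and bounded: "\<And>x. cmod (l x) \<le> C * norm x"
  shows "closed (l -` {0})" and "csubspace (l -` {0})"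
proof -
  have "bounded_linear l"
  proof (rule bounded_linear_intro[OF add])
    show "l (r *\<^sub>R x) = r *\<^sub>R l x" for r x
      using scaleC[of "complex_of_real r" x] by (simp add: scaleC_of_real scaleR_conv_of_real)
    show "norm (l x) \<le> norm x * C" for x
      using bounded[of x] by (simp only: mult.commute)
  qed
  then show "closed (l -` {0})"
    by (intro continuous_closed_vimage) (auto intro: linear_continuous_at)
  show "csubspace (l -` {0})"
    unfolding csubspace_def using add[of 0 0] by (simp add: add scaleC)
qed

lemma riesz_representation:
  fixes l :: "'h::{complex_inner,complete_space} \<Rightarrow> complex"
  assumes add: "\<And>x y. l (x + y) = l x + l y"
    and scaleC: "\<And>c x. l (c *\<^sub>C x) = cnj c * l x"
    and bounded: "\<And>x. cmod (l x) \<le> C * norm x"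
  shows "\<exists>v. \<forall>w. cinner v w = l w"
proof (cases "\<forall>w. l w = 0")
  case True
  then show ?thesis by (intro exI[of _ 0]) simp
next
  case False
  then obtain w where lw: "l w \<noteq> 0" by blast
  have l0: "l 0 = 0"
    using add[of 0 0] by simp
  have diff: "l (x - y) = l x - l y" for x y
    using add[of "x - y" y] by simp
  obtain n where n: "l n = 0"
    and nearest: "\<And>m. l m = 0 \<Longrightarrow> norm (w - n) \<le> norm (w - m)"
    using closed_subspace_nearest_point[OF bounded_antilinear_kernel[OF add scaleC bounded], of w]
    by auto
  define z where "z = w - n"
  have lz: "l z = l w"
    unfolding z_def using diff n by simp
  have orth: "cinner z x = 0" if "l x = 0" for x
  proof (rule nearest_point_orthogonal)
    fix c
    have "l (n + c *\<^sub>C x) = 0"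
      using n that by (simp only: add scaleC) simp
    then have "norm (w - n) \<le> norm (w - (n + c *\<^sub>C x))"
      by (rule nearest)
    then show "norm z \<le> norm (z - c *\<^sub>C x)"
      unfolding z_def by (simp only: diff_diff_eq)
  qed
  have z: "complex_of_real ((norm z)\<^sup>2) \<noteq> 0"
    using lz lw l0 by auto
  show ?thesis
  proof (intro exI[of _ "(l z / complex_of_real ((norm z)\<^sup>2)) *\<^sub>C z"] allI)
    fix x
    define c where "c = cnj (l x / l z)"
    have "l (x - c *\<^sub>C z) = 0"
      unfolding c_def using diff scaleC lz lw by simp
    then have "cinner z (x - c *\<^sub>C z) = 0"
      by (rule orth)
    then have "cinner z x = cnj c * cinner z z"
      by (simp add: cinner_diff_right cinner_scaleC_right)
    then have "cinner z x = (l x / l z) * complex_of_real ((norm z)\<^sup>2)"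
      unfolding c_def cinner_self by simp
    then show "cinner ((l z / complex_of_real ((norm z)\<^sup>2)) *\<^sub>C z) x = l x"
      using z lz lw by (simp add: cinner_scaleC_left)
  qed
qed

lemma cinner_dense_eq:
  fixes D :: "'h::complex_inner set"
  assumes dense: "closure D = UNIV" and eq: "\<And>u. u \<in> D \<Longrightarrow> cinner u w = cinner u w'"
  shows "w = w'"
proof (rule ccontr)
  assume "w \<noteq> w'"
  define d where "d = w - w'"
  have d: "norm d > 0"
    using \<open>w \<noteq> w'\<close> unfolding d_def by simp
  have orth: "cinner u d = 0" if "u \<in> D" for u
    using eq[OF that] unfolding d_def by (simp add: cinner_diff_right)
  obtain u where u: "u \<in> D" "dist u d < norm d / 2"
    using dense d closure_approachable[of d D] by (metis UNIV_I half_gt_zero)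
  have "cinner d d = cinner (d - u) d"
    using orth[OF u(1)] by (simp add: cinner_diff_left)
  then have "(norm d)\<^sup>2 = cmod (cinner (d - u) d)"
    by (metis cinner_self norm_of_real abs_power2)
  also have "\<dots> \<le> norm (d - u) * norm d"
    by (rule norm_cinner_le)
  also have "\<dots> \<le> norm d / 2 * norm d"
    using u(2) by (intro mult_right_mono) (auto simp: dist_norm norm_minus_commute)
  also have "\<dots> < (norm d)\<^sup>2"
    using d by (simp add: power2_eq_square)
  finally show False
    by simp
qed

lemma cinner_adj:
  assumes "v \<in> adj_dom D T" and "u \<in> D"
  shows "cinner (T u) v = cinner u (adj D T v)"
proof -
  have "\<exists>w. \<forall>u\<in>D. cinner (T u) v = cinner u w"
    using assms(1) unfolding adj_dom_def by blast
  then have "\<forall>u\<in>D. cinner (T u) v = cinner u (adj D T v)"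
    unfolding adj_def by (rule someI_ex)
  then show ?thesis
    using assms(2) by blast
qed

lemma adj_eqI:
  fixes D :: "'h::complex_inner set"
  assumes dense: "closure D = UNIV" and eq: "\<And>u. u \<in> D \<Longrightarrow> cinner (T u) v = cinner u w"
  shows "v \<in> adj_dom D T" and "adj D T v = w"
proof -
  show v: "v \<in> adj_dom D T"
    unfolding adj_dom_def using eq by blast
  show "adj D T v = w"
    using dense by (rule cinner_dense_eq) (simp add: eq cinner_adj[OF v, symmetric])
qed

lemma
  fixes D :: "'h::complex_inner set"
  assumes dense: "closure D = UNIV" and v: "v \<in> adj_dom D T" and v': "v' \<in> adj_dom D T"
  shows adj_dom_add: "v + v' \<in> adj_dom D T"
    and adj_add: "adj D T (v + v') = adj D T v + adj D T v'"
    and adj_dom_diff: "v - v' \<in> adj_dom D T"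
    and adj_diff: "adj D T (v - v') = adj D T v - adj D T v'"
proof -
  have "cinner (T u) (v + v') = cinner u (adj D T v + adj D T v')"
    and "cinner (T u) (v - v') = cinner u (adj D T v - adj D T v')" if "u \<in> D" for u
    using that by (simp_all add: cinner_adj[OF v] cinner_adj[OF v'] cinner_add_right cinner_diff_right)
  then show "v + v' \<in> adj_dom D T" "adj D T (v + v') = adj D T v + adj D T v'"
    "v - v' \<in> adj_dom D T" "adj D T (v - v') = adj D T v - adj D T v'"
    using adj_eqI[OF dense] by blast+
qed

lemma adj_dom_zero: "closure D = UNIV \<Longrightarrow> (0::'h::complex_inner) \<in> adj_dom D T"
  and adj_zero: "closure D = UNIV \<Longrightarrow> adj D T (0::'h::complex_inner) = 0"
  using adj_eqI[of D T 0 0] by simp_all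

lemma norm_le_graph_norm: "norm v \<le> graph_norm D T v"
  and norm_adj_le_graph_norm: "norm (adj D T v) \<le> graph_norm D T v"
  and graph_norm_le: "graph_norm D T v \<le> norm v + norm (adj D T v)"
  and graph_norm_nonneg: "0 \<le> graph_norm D T v"
  unfolding graph_norm_def by (simp_all add: sqrt_sum_squares_le_sum)

lemma graph_norm_eq_norm: "adj D T v = 0 \<Longrightarrow> graph_norm D T v = norm v"
  unfolding graph_norm_def by simp

lemma antidual_add: "f \<in> antidual K ipK \<Longrightarrow> x \<in> K \<Longrightarrow> y \<in> K \<Longrightarrow> f (x + y) = f x + f y"
  and antidual_scaleC: "f \<in> antidual K ipK \<Longrightarrow> x \<in> K \<Longrightarrow> f (c *\<^sub>C x) = cnj c * f x"
  and antidual_bounded: "f \<in> antidual K ipK \<Longrightarrow> \<exists>C. \<forall>x\<in>K. cmod (f x) \<le> C * ip_norm ipK x"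
  and antidual_outside: "f \<in> antidual K ipK \<Longrightarrow> x \<notin> K \<Longrightarrow> f x = 0"
  unfolding antidual_def by blast+

context inner_product_on
begin

lemma antidual_zero: "f \<in> antidual V ip \<Longrightarrow> f 0 = 0"
  using antidual_add[of f V ip 0 0] mem_zero by simp

lemma dual_norm_bdd_above:
  assumes f: "f \<in> antidual V ip"
  shows "bdd_above ((\<lambda>x. cmod (f x)) ` {x\<in>V. nm x \<le> 1})"
proof -
  obtain C where C: "\<And>x. x \<in> V \<Longrightarrow> cmod (f x) \<le> C * nm x"
    using antidual_bounded[OF f] by blast
  show ?thesis
  proof (rule bdd_aboveI[of _ "max C 0"])
    fix y
    assume "y \<in> (\<lambda>x. cmod (f x)) ` {x\<in>V. nm x \<le> 1}"
    then obtain x where x: "x \<in> V" "nm x \<le> 1" "y = cmod (f x)" by blast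
    have "y \<le> max C 0 * nm x"
      using C[OF x(1)] nm_nonneg[OF x(1)] x(3) by (smt (verit) mult_right_mono max.cobounded1)
    also have "\<dots> \<le> max C 0"
      using x(2) by (simp add: mult_left_le)
    finally show "y \<le> max C 0" .
  qed
qed

lemma norm_le_dual_norm:
  assumes f: "f \<in> antidual V ip" and x: "x \<in> V"
  shows "cmod (f x) \<le> dual_norm V ip f * nm x"
proof (cases "x = 0")
  case True
  then show ?thesis using antidual_zero[OF f] nm_zero by simp
next
  case False
  define n where "n = nm x"
  have n: "n > 0"
    using False nm_nonneg[OF x] nm_eq_zero_iff[OF x] unfolding n_def by linarith
  define x' where "x' = complex_of_real (1 / n) *\<^sub>C x"
  have "x' \<in> V"
    unfolding x'_def using x by (rule mem_scaleC)
  moreover have "nm x' = 1"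
    unfolding x'_def nm_scaleC[OF x] n_def[symmetric] using n by (simp add: norm_divide)
  ultimately
  have "cmod (f x') \<le> dual_norm V ip f"
    unfolding dual_norm_def using dual_norm_bdd_above[OF f] by (intro cSUP_upper) auto
  moreover have "f x' = complex_of_real (1 / n) * f x"
    unfolding x'_def using antidual_scaleC[OF f x] by simp
  ultimately show ?thesis
    using n unfolding n_def[symmetric] by (simp add: norm_divide field_simps)
qed

lemma dual_norm_nonneg: "f \<in> antidual V ip \<Longrightarrow> 0 \<le> dual_norm V ip f"
  using norm_le_dual_norm[of f 0] mem_zero nm_zero antidual_zero
    order_trans[OF norm_ge_zero] dual_norm_bdd_above
  unfolding dual_norm_def by (auto intro!: cSUP_upper2[of _ _ 0])

end

lemma baire_sublevel_ball:
  fixes p :: "'a::complete_space \<Rightarrow> real"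
  shows "\<exists>n x0 r. r > 0 \<and> ball x0 r \<subseteq> closure {x. p x \<le> real n}"
proof -
  define U where "U n = closure {x. p x \<le> real n}" for n :: nat
  have cover: "(\<Union>n. U n) = UNIV"
  proof -
    have "x \<in> U (nat \<lceil>p x\<rceil>)" for x
      unfolding U_def by (rule closure_subset[THEN subsetD]) (simp add: real_nat_ceiling_ge)
    then show ?thesis
      by blast
  qed
  have "\<exists>n. interior (U n) \<noteq> {}"
  proof (rule ccontr)
    assume "\<nexists>n. interior (U n) \<noteq> {}"
    then have empty: "interior (U n) = {}" for n
      by blast
    have "euclidean interior_of (\<Union>n. U n) = {}"
    proof (rule Baire_category_alt)
      show "completely_metrizable_space (euclidean :: 'a topology) \<or>
          locally_compact_space (euclidean :: 'a topology) \<and> regular_space euclidean"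
        using completely_metrizable_space_euclidean by blast
      show "closedin euclidean T \<and> euclidean interior_of T = {}" if "T \<in> range U" for T
        using that empty by (auto simp: U_def closed_closedin[symmetric])
    qed simp
    then show False
      unfolding cover by simp
  qed
  then obtain n x0 where "x0 \<in> interior (U n)"
    by blast
  then obtain r where "r > 0" "ball x0 r \<subseteq> U n"
    by (auto simp: mem_interior)
  then show ?thesis
    unfolding U_def by blast
qed

lemma (in inner_product_on) ball_difference_approx:
  fixes B :: "'h::complex_inner \<Rightarrow> 'a"
  assumes B: "lin_on UNIV B" and BV: "\<And>x. B x \<in> V"
    and ball: "ball x0 r \<subseteq> closure {x. nm (B x) \<le> a}"
    and y: "norm y < r" and e: "e > 0"
  shows "\<exists>w. nm (B w) \<le> 2 * a \<and> norm (y - w) < e"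
proof -
  have "x0 + y \<in> closure {x. nm (B x) \<le> a}" "x0 \<in> closure {x. nm (B x) \<le> a}"
    using subsetD[OF ball, of "x0 + y"] subsetD[OF ball, of x0] y norm_ge_zero[of y]
    by (simp_all add: dist_norm)
  then obtain u v where uv: "nm (B u) \<le> a" "nm (B v) \<le> a"
    and u: "dist u (x0 + y) < e / 2" and v: "dist v x0 < e / 2"
    using e unfolding closure_approachable by (metis mem_Collect_eq half_gt_zero)
  have "nm (B (u - v)) \<le> nm (B u) + nm (B v)"
    using nm_triangle_diff[OF BV BV] by (simp add: lin_on_diff[OF B])
  moreover have "norm ((u - v) - y) \<le> norm (u - (x0 + y)) + norm (v - x0)"
    using norm_triangle_ineq4[of "u - (x0 + y)" "v - x0"] by (simp add: algebra_simps)
  ultimately show ?thesis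
    using uv u v by (intro exI[of _ "u - v"]) (simp add: dist_norm norm_minus_commute[of y])
qed

lemma baire_approximately_bounded:
  fixes B :: "'h::{complex_inner,complete_space} \<Rightarrow> 'a::complex_inner"
  assumes V: "inner_product_on V ip" and B: "lin_on UNIV B" and BV: "\<And>x. B x \<in> V"
  shows "\<exists>c\<ge>0. \<forall>y. \<forall>e>0. \<exists>w. ip_norm ip (B w) \<le> c * norm y \<and> norm (y - w) < e"
proof -
  interpret V: inner_product_on V ip by fact
  obtain n x0 r where r: "r > 0" "ball x0 r \<subseteq> closure {x. V.nm (B x) \<le> real n}"
    using baire_sublevel_ball[of "\<lambda>x. V.nm (B x)"] by blast
  define c where "c = 4 * real n / r"
  show ?thesis
  proof (intro exI[of _ c] conjI allI impI)
    show "c \<ge> 0"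
      unfolding c_def using r by simp
    fix y :: 'h and e :: real
    assume e: "e > 0"
    show "\<exists>w. V.nm (B w) \<le> c * norm y \<and> norm (y - w) < e"
    proof (cases "y = 0")
      case True
      then show ?thesis
        using e lin_on_zero[OF B] V.nm_zero by (intro exI[of _ 0]) simp
    next
      case False
      define t where "t = r / (2 * norm y)"
      have t: "t > 0" and "norm (t *\<^sub>R y) < r"
        unfolding t_def using r False by simp_all
      moreover have "e * t > 0"
        using e t by simp
      ultimately obtain w where w: "V.nm (B w) \<le> 2 * real n" "norm (t *\<^sub>R y - w) < e * t"
        using V.ball_difference_approx[OF B BV r(2)] by blast
      show ?thesis
      proof (intro exI[of _ "(1/t) *\<^sub>R w"] conjI)
        have "V.nm (B ((1/t) *\<^sub>R w)) = (1/t) * V.nm (B w)"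
          using t BV by (simp add: lin_on_scaleR[OF B] V.nm_scaleR)
        also have "\<dots> \<le> c * norm y"
          using w(1) t False r unfolding c_def t_def by (simp add: field_simps)
        finally show "V.nm (B ((1/t) *\<^sub>R w)) \<le> c * norm y" .
        have "y - (1/t) *\<^sub>R w = (1/t) *\<^sub>R (t *\<^sub>R y - w)"
          using t by (simp add: algebra_simps)
        then have "norm (y - (1/t) *\<^sub>R w) = (1/t) * norm (t *\<^sub>R y - w)"
          using t by simp
        also have "\<dots> < e"
          using w(2) t by (simp add: field_simps)
        finally show "norm (y - (1/t) *\<^sub>R w) < e" .
      qed
    qed
  qed
qed

lemma (in inner_product_on) geometric_tail_bound:
  assumes P: "\<And>k. P k \<in> V" and step: "\<And>k. nm (P (Suc k) - P k) \<le> M * (1/2)^k"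
    and "l \<le> m"
  shows "nm (P m - P l) \<le> 2 * M * (1/2)^l"
proof -
  have tail: "nm (P (l + d) - P l) \<le> 2 * M * ((1/2)^l - (1/2)^(l + d))" for d
  proof (induction d)
    case 0
    then show ?case using nm_zero by simp
  next
    case (Suc d)
    have "nm (P (l + Suc d) - P l) \<le> nm (P (l + d) - P l) + nm (P (Suc (l + d)) - P (l + d))"
      using nm_triangle[OF mem_diff[OF P P] mem_diff[OF P P], of "l + d" l "Suc (l + d)" "l + d"]
      by simp
    also have "\<dots> \<le> 2 * M * ((1/2)^l - (1/2)^(l + d)) + M * (1/2)^(l + d)"
      using Suc step by (intro add_mono)
    finally show ?case
      by (simp add: algebra_simps)
  qed
  have "M \<ge> 0"
    using step[of 0] nm_nonneg[OF mem_diff[OF P[of 1] P[of 0]]] by simp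
  then have "2 * M * ((1/2)^l - (1/2)^m) \<le> 2 * M * (1/2)^l"
    by (intro mult_left_mono) auto
  then show ?thesis
    using tail[of "m - l"] \<open>l \<le> m\<close> by simp
qed

lemma (in inner_product_on) bounded_additive_tendsto:
  fixes S :: "'a \<Rightarrow> 'b::real_normed_vector"
  assumes S_add: "\<And>x y. x \<in> V \<Longrightarrow> y \<in> V \<Longrightarrow> S (x + y) = S x + S y"
    and S_bounded: "\<And>u. u \<in> V \<Longrightarrow> norm (S u) \<le> C * nm u"
    and P: "\<And>k. P k \<in> V" and u: "u \<in> V" and lim: "(\<lambda>k. nm (P k - u)) \<longlonglongrightarrow> 0"
  shows "(\<lambda>k. S (P k)) \<longlonglongrightarrow> S u"
proof (rule LIM_zero_cancel, rule Lim_null_comparison)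
  have "S (P k - u) = S (P k) - S u" for k
    using S_add[OF mem_diff[OF P u] u] by simp
  then have "norm (S (P k) - S u) \<le> C * nm (P k - u)" for k
    using S_bounded[OF mem_diff[OF P u]] by simp
  then show "\<forall>\<^sub>F k in sequentially. norm (S (P k) - S u) \<le> C * nm (P k - u)"
    by simp
  show "(\<lambda>k. C * nm (P k - u)) \<longlonglongrightarrow> 0"
    using tendsto_mult_right_zero[OF lim] .
qed

lemma (in inner_product_on) geometric_Cauchy:
  assumes P: "\<And>k. P k \<in> V" and step: "\<And>k. nm (P (Suc k) - P k) \<le> M * (1/2)^k"
    and e: "e > 0"
  shows "\<exists>N. \<forall>m\<ge>N. \<forall>n\<ge>N. nm (P m - P n) < e"
proof -
  have M: "M \<ge> 0"
    using step[of 0] nm_nonneg[OF mem_diff[OF P[of 1] P[of 0]]] by simp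
  have "(\<lambda>N. 2 * M * (1/2)^N) \<longlonglongrightarrow> 0"
    by (intro tendsto_mult_right_zero LIMSEQ_power_zero) simp
  from order_tendstoD(2)[OF this e] obtain N where N: "2 * M * (1/2)^N < e"
    unfolding eventually_sequentially by auto
  have mono: "2 * M * (1/2)^k \<le> 2 * M * (1/2)^N" if "k \<ge> N" for k
    using M that by (intro mult_left_mono power_decreasing) auto
  have "nm (P m - P n) < e" if "m \<ge> N" "n \<ge> N" for m n
  proof (cases "n \<le> m")
    case True
    then show ?thesis
      using geometric_tail_bound[OF P step True] mono[OF that(2)] N by linarith
  next
    case False
    then have mn: "m \<le> n"
      by simp
    show ?thesis
      using geometric_tail_bound[OF P step mn] mono[OF that(1)] N nm_minus_commute[OF P P]
      by simp
  qed
  then show ?thesis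
    by blast
qed

lemma own_hilbert_geometric_limit:
  assumes V: "own_hilbert V ip" and P: "\<And>k. P k \<in> V"
    and step: "\<And>k. ip_norm ip (P (Suc k) - P k) \<le> M * (1/2)^k"
  shows "\<exists>u\<in>V. (\<lambda>k. ip_norm ip (P k - u)) \<longlonglongrightarrow> 0 \<and> ip_norm ip (u - P 0) \<le> 2 * M"
proof -
  interpret V: inner_product_on V ip
    using own_hilbert_inner_product_on[OF V] .
  have tail_le: "V.nm (P m - P l) \<le> 2 * M * (1/2)^l" if "l \<le> m" for l m
    using V.geometric_tail_bound[OF P step that] .
  have "\<exists>u\<in>V. (\<lambda>k. V.nm (P k - u)) \<longlonglongrightarrow> 0"
    using own_hilbert_complete[OF V] P V.geometric_Cauchy[OF P step] by blast
  then obtain u where u: "u \<in> V" "(\<lambda>k. V.nm (P k - u)) \<longlonglongrightarrow> 0" by blast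
  have "V.nm (u - P 0) \<le> V.nm (P k - u) + 2 * M" for k
  proof -
    have "V.nm (u - P 0) \<le> V.nm (u - P k) + V.nm (P k - P 0)"
      using V.nm_triangle[of "u - P k" "P k - P 0"] u(1) P V.mem_diff by simp
    then show ?thesis
      using tail_le[of 0 k] V.nm_minus_commute[OF u(1) P] by simp
  qed
  moreover have "(\<lambda>k. V.nm (P k - u) + 2 * M) \<longlonglongrightarrow> 0 + 2 * M"
    by (intro tendsto_add u(2) tendsto_const)
  ultimately have "V.nm (u - P 0) \<le> 2 * M"
    using LIMSEQ_le_const[of _ "2 * M"] by simp
  then show ?thesis
    using u by blast
qed

lemma correction_iteration:
  fixes S :: "'h::complex_inner \<Rightarrow> 'b::real_normed_vector" and f :: "'b \<Rightarrow> 'h"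
    and p :: "'h \<Rightarrow> real"
  assumes D: "csubspace D" and S_add: "\<And>x y. x \<in> D \<Longrightarrow> y \<in> D \<Longrightarrow> S (x + y) = S x + S y"
    and fD: "\<And>y. f y \<in> D" and f_norm: "\<And>y. p (f y) \<le> c * norm y" and c: "c \<ge> 0"
    and f_approx: "\<And>y. norm (y - S (f y)) \<le> norm y / 2"
    and xs_0: "xs 0 = x" and xs_Suc: "\<And>k. xs (Suc k) = xs k - S (f (xs k))"
    and P_def: "\<And>k. P k = (\<Sum>i<k. f (xs i))"
  shows "P k \<in> D" and "S (P k) = x - xs k" and "norm (xs k) \<le> (1/2)^k * norm x"
    and "p (P (Suc k) - P k) \<le> c * norm x * (1/2)^k"
proof -
  show PD: "P k \<in> D" for k
    unfolding P_def by (induction k) (simp_all add: csubspace_zero[OF D] csubspace_add[OF D] fD)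
  show "S (P k) = x - xs k"
  proof (induction k)
    case 0
    then show ?case
      using S_add[OF csubspace_zero[OF D] csubspace_zero[OF D]] by (simp add: P_def xs_0)
  next
    case (Suc k)
    have "S (P (Suc k)) = S (P k) + S (f (xs k))"
      using S_add[OF PD fD] by (simp add: P_def)
    then show ?case
      using Suc xs_Suc by simp
  qed
  show xs_le: "norm (xs k) \<le> (1/2)^k * norm x" for k
  proof (induction k)
    case 0
    then show ?case by (simp add: xs_0)
  next
    case (Suc k)
    then show ?case using xs_Suc[of k] f_approx[of "xs k"] by simp
  qed
  show "p (P (Suc k) - P k) \<le> c * norm x * (1/2)^k"
    using f_norm[of "xs k"] mult_left_mono[OF xs_le[of k] c] by (simp add: P_def mult_ac)
qed

lemma own_hilbert_successive_approximation:
  fixes S :: "'h::complex_inner \<Rightarrow> 'b::real_normed_vector"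
  assumes H: "own_hilbert H ip" and D: "D \<subseteq> H" "csubspace D"
    and D_closed: "\<And>X l. (\<forall>n. X n \<in> D) \<Longrightarrow> l \<in> H \<Longrightarrow> (\<lambda>n. ip_norm ip (X n - l)) \<longlonglongrightarrow> 0 \<Longrightarrow> l \<in> D"
    and S_add: "\<And>x y. x \<in> H \<Longrightarrow> y \<in> H \<Longrightarrow> S (x + y) = S x + S y"
    and S_bounded: "\<And>u. u \<in> H \<Longrightarrow> norm (S u) \<le> C * ip_norm ip u"
    and c: "c \<ge> 0"
    and approx: "\<And>y. \<exists>u\<in>D. ip_norm ip u \<le> c * norm y \<and> norm (y - S u) \<le> norm y / 2"
  shows "\<exists>u\<in>D. S u = x \<and> ip_norm ip u \<le> 2 * c * norm x"
proof -
  interpret H: inner_product_on H ip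
    using own_hilbert_inner_product_on[OF H] .
  obtain f where fD: "\<And>y. f y \<in> D" and f_norm: "\<And>y. ip_norm ip (f y) \<le> c * norm y"
    and f_approx: "\<And>y. norm (y - S (f y)) \<le> norm y / 2"
    using approx by metis
  \<comment> \<open>\<open>xs k\<close> is the residual after \<open>k\<close> corrections, \<open>P k\<close> the accumulated correction\<close>
  define xs where "xs = rec_nat x (\<lambda>_ y. y - S (f y))"
  define P where "P k = (\<Sum>i<k. f (xs i))" for k
  have xs: "xs 0 = x" "xs (Suc k) = xs k - S (f (xs k))" for k
    unfolding xs_def by simp_all
  have S_add_D: "S (x + y) = S x + S y" if "x \<in> D" "y \<in> D" for x y
    using S_add that D(1) by blast
  note iteration = correction_iteration[OF D(2) S_add_D fD f_norm c f_approx xs P_def]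
  have PH: "P k \<in> H" for k
    using iteration(1) D(1) by blast
  obtain u where u: "u \<in> H" and lim: "(\<lambda>k. ip_norm ip (P k - u)) \<longlonglongrightarrow> 0"
    and u_le: "ip_norm ip (u - P 0) \<le> 2 * (c * norm x)"
    using own_hilbert_geometric_limit[where P = P, OF H PH iteration(4)] by blast
  have "(\<lambda>k. S (P k)) \<longlonglongrightarrow> S u"
    using H.bounded_additive_tendsto[OF S_add S_bounded PH u lim] .
  moreover have "(\<lambda>k. S (P k)) \<longlonglongrightarrow> x"
  proof -
    have "(\<lambda>k. (1/2)^k * norm x) \<longlonglongrightarrow> 0"
      by (intro tendsto_mult_left_zero LIMSEQ_power_zero) simp
    then have "(\<lambda>k. xs k) \<longlonglongrightarrow> 0"
      by (rule Lim_null_comparison[rotated]) (simp add: iteration(3))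
    then show ?thesis
      using tendsto_diff[OF tendsto_const, of xs 0 sequentially x] by (simp add: iteration(2))
  qed
  ultimately have "S u = x"
    by (rule LIMSEQ_unique)
  moreover have "u \<in> D"
    using D_closed[of P u] iteration(1) u lim by blast
  moreover have "ip_norm ip u \<le> 2 * c * norm x"
    using u_le by (simp add: P_def)
  ultimately show ?thesis by blast
qed

text \<open>The open mapping theorem for the bounded surjection \<open>S : D \<rightarrow> H\<^sub>0\<close>:
  a linear right inverse of \<open>S\<close> with values in the closed subspace \<open>D\<close> is bounded into \<open>H\<close>.\<close>
lemma own_hilbert_bounded_right_inverse:
  fixes S B :: "'h::{complex_inner,complete_space} \<Rightarrow> 'h"
  assumes H: "own_hilbert H ip" and D: "D \<subseteq> H" "csubspace D"
    and D_closed: "\<And>X l. (\<forall>n. X n \<in> D) \<Longrightarrow> l \<in> H \<Longrightarrow> (\<lambda>n. ip_norm ip (X n - l)) \<longlonglongrightarrow> 0 \<Longrightarrow> l \<in> D"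
    and S_add: "\<And>x y. x \<in> H \<Longrightarrow> y \<in> H \<Longrightarrow> S (x + y) = S x + S y"
    and S_bounded: "\<And>u. u \<in> H \<Longrightarrow> norm (S u) \<le> C * ip_norm ip u"
    and B: "lin_on UNIV B" "\<And>x. B x \<in> D" "\<And>x. S (B x) = x" "\<And>u. u \<in> D \<Longrightarrow> B (S u) = u"
  shows "\<exists>C. \<forall>x. ip_norm ip (B x) \<le> C * norm x"
proof -
  interpret H: inner_product_on H ip
    using own_hilbert_inner_product_on[OF H] .
  obtain c where c: "c \<ge> 0"
    and almost: "\<And>y e. e > 0 \<Longrightarrow> \<exists>w. ip_norm ip (B w) \<le> c * norm y \<and> norm (y - w) < e"
    using baire_approximately_bounded[OF H.inner_product_on_axioms B(1)] B(2) D(1) by blast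
  have approx: "\<exists>u\<in>D. ip_norm ip u \<le> c * norm y \<and> norm (y - S u) \<le> norm y / 2" for y
  proof (cases "y = 0")
    case True
    then show ?thesis
      using B(2,3)[of 0] lin_on_zero[OF B(1)] H.nm_zero by (intro bexI[of _ "B 0"]) auto
  next
    case False
    then obtain w where "ip_norm ip (B w) \<le> c * norm y" "norm (y - w) < norm y / 2"
      using almost[of "norm y / 2" y] by auto
    then show ?thesis
      using B(2,3)[of w] by (intro bexI[of _ "B w"]) auto
  qed
  have "ip_norm ip (B x) \<le> 2 * c * norm x" for x
  proof -
    have "\<exists>u\<in>D. S u = x \<and> ip_norm ip u \<le> 2 * c * norm x"
      using H D D_closed S_add S_bounded c approx by (rule own_hilbert_successive_approximation)
    then obtain u where "u \<in> D" "S u = x" "ip_norm ip u \<le> 2 * c * norm x"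
      by blast
    then show ?thesis
      using B(4) by auto
  qed
  then show ?thesis by blast
qed

lemma nonneg_bound_constant:
  fixes f g :: "'a \<Rightarrow> real"
  assumes "\<And>x. x \<in> A \<Longrightarrow> f x \<le> C * g x" and "\<And>x. x \<in> A \<Longrightarrow> 0 \<le> g x"
  shows "\<exists>C'\<ge>0. \<forall>x\<in>A. f x \<le> C' * g x"
proof (intro exI[of _ "max C 0"] conjI ballI)
  fix x
  assume "x \<in> A"
  then show "f x \<le> max C 0 * g x"
    using assms(1)[OF \<open>x \<in> A\<close>] mult_right_mono[OF max.cobounded1[of C 0] assms(2)[OF \<open>x \<in> A\<close>]]
    by linarith
qed simp

text \<open>The Dirichlet realization \<open>A\<close> (the restriction of \<open>T\<^sup>*\<close> to \<open>Ker \<gamma>\<^sub>0\<close>) enters only through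
  its inverse \<open>B\<close>.\<close>
locale dirichlet_setting =
  fixes DT :: "'h::{complex_inner,complete_space} set" and T :: "'h \<Rightarrow> 'h"
    and H1 :: "'h set" and ip1 :: "'h \<Rightarrow> 'h \<Rightarrow> complex"
    and K :: "'k::{complex_inner,complete_space} set" and ipK :: "'k \<Rightarrow> 'k \<Rightarrow> complex"
    and \<gamma>0 \<gamma>1 :: "'h \<Rightarrow> 'k" and \<Gamma>0 :: "'h \<Rightarrow> 'k \<Rightarrow> complex" and B :: "'h \<Rightarrow> 'h"
  assumes T_dense: "closure DT = UNIV"
    and H1_hilb: "own_hilbert H1 ip1"
    and K_hilb: "own_hilbert K ipK"
    and H1_sub: "H1 \<subseteq> adj_dom DT T"
    and H1_graph_dense: "\<forall>v\<in>adj_dom DT T. \<forall>e>0. \<exists>u\<in>H1. graph_norm DT T (v - u) < e"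
    and Tstar_bdd: "\<exists>C. \<forall>u\<in>H1. norm (adj DT T u) \<le> C * ip_norm ip1 u"
    and \<gamma>0_map: "\<gamma>0 ` H1 \<subseteq> K" and \<gamma>1_map: "\<gamma>1 ` H1 \<subseteq> K"
    and \<gamma>0_lin: "lin_on H1 \<gamma>0" and \<gamma>1_lin: "lin_on H1 \<gamma>1"
    and \<gamma>0_bdd: "\<exists>C. \<forall>u\<in>H1. ip_norm ipK (\<gamma>0 u) \<le> C * ip_norm ip1 u"
    and \<gamma>1_bdd: "\<exists>C. \<forall>u\<in>H1. ip_norm ipK (\<gamma>1 u) \<le> C * ip_norm ip1 u"
    and \<gamma>_surj: "\<forall>a\<in>K. \<forall>b\<in>K. \<exists>u\<in>H1. \<gamma>0 u = a \<and> \<gamma>1 u = b"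
    and DT_sub: "DT \<subseteq> {u\<in>H1. \<gamma>0 u = 0 \<and> \<gamma>1 u = 0}"
    and T_Tstar: "\<And>u. u \<in> DT \<Longrightarrow> T u = adj DT T u"
    and lagrange: "\<forall>u\<in>H1. \<forall>v\<in>H1.
        cinner (adj DT T u) v - cinner u (adj DT T v)
          = cinner (\<gamma>1 u) (\<gamma>0 v) - cinner (\<gamma>0 u) (\<gamma>1 v)"
    and \<Gamma>0_map: "\<forall>u\<in>adj_dom DT T. \<Gamma>0 u \<in> antidual K ipK"
    and \<Gamma>0_add: "\<forall>u\<in>adj_dom DT T. \<forall>v\<in>adj_dom DT T. \<forall>x. \<Gamma>0 (u + v) x = \<Gamma>0 u x + \<Gamma>0 v x"
    and \<Gamma>0_scale: "\<forall>c. \<forall>u\<in>adj_dom DT T. \<forall>x. \<Gamma>0 (c *\<^sub>C u) x = c * \<Gamma>0 u x"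
    and \<Gamma>0_bdd: "\<exists>C. \<forall>u\<in>adj_dom DT T. dual_norm K ipK (\<Gamma>0 u) \<le> C * graph_norm DT T u"
    and \<Gamma>0_ext: "\<forall>u\<in>H1. \<Gamma>0 u = emb K (\<gamma>0 u)"
    and B_lin: "lin_on UNIV B"
    and B_bdd: "\<exists>C. \<forall>x. norm (B x) \<le> C * norm x"
    and B_H1: "\<And>x. B x \<in> H1" and \<gamma>0_B: "\<And>x. \<gamma>0 (B x) = 0"
    and Tstar_B: "\<And>x. adj DT T (B x) = x"
    and B_Tstar: "\<And>u. u \<in> H1 \<Longrightarrow> \<gamma>0 u = 0 \<Longrightarrow> B (adj DT T u) = u"

sublocale dirichlet_setting \<subseteq> H: inner_product_on H1 ip1
  using own_hilbert_inner_product_on[OF H1_hilb] .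

sublocale dirichlet_setting \<subseteq> K: inner_product_on K ipK
  using own_hilbert_inner_product_on[OF K_hilb] .

context dirichlet_setting
begin

abbreviation "Tstar \<equiv> adj DT T"
abbreviation "dom_Tstar \<equiv> adj_dom DT T"
abbreviation "ker_Tstar \<equiv> {v \<in> dom_Tstar. Tstar v = 0}"
abbreviation "dom_A \<equiv> {u \<in> H1. \<gamma>0 u = 0}"

lemma H1_dom_Tstar: "u \<in> H1 \<Longrightarrow> u \<in> dom_Tstar"
  using H1_sub by blast

lemma B_dom_A: "B x \<in> dom_A"
  using B_H1 \<gamma>0_B by simp

lemma \<gamma>0_K: "u \<in> H1 \<Longrightarrow> \<gamma>0 u \<in> K" and \<gamma>1_K: "u \<in> H1 \<Longrightarrow> \<gamma>1 u \<in> K"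
  using \<gamma>0_map \<gamma>1_map by blast+

lemma \<Gamma>0_antidual: "v \<in> dom_Tstar \<Longrightarrow> \<Gamma>0 v \<in> antidual K ipK"
  using \<Gamma>0_map by blast

lemma \<Gamma>0_diff:
  assumes v: "v \<in> dom_Tstar" and v': "v' \<in> dom_Tstar"
  shows "\<Gamma>0 (v - v') x = \<Gamma>0 v x - \<Gamma>0 v' x"
proof -
  have "- v' \<in> dom_Tstar"
    using adj_dom_diff[OF T_dense adj_dom_zero[OF T_dense] v'] by simp
  then have "\<Gamma>0 (v + - v') x = \<Gamma>0 v x + \<Gamma>0 (- v') x"
    using \<Gamma>0_add v by blast
  moreover have "\<Gamma>0 ((-1) *\<^sub>C v') x = (-1) * \<Gamma>0 v' x"
    using \<Gamma>0_scale v' by blast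
  ultimately show ?thesis
    by (simp add: scaleC_minus_one)
qed

lemma \<Gamma>0_dom_A: "u \<in> dom_A \<Longrightarrow> \<Gamma>0 u = (\<lambda>x. 0)"
  using \<Gamma>0_ext by (auto simp: emb_def)

lemma \<Gamma>0_H1: "u \<in> H1 \<Longrightarrow> x \<in> K \<Longrightarrow> \<Gamma>0 u x = cinner (\<gamma>0 u) x"
  using \<Gamma>0_ext by (simp add: emb_def)

lemma \<Gamma>0_bounded: "\<exists>C\<ge>0. \<forall>v\<in>dom_Tstar. dual_norm K ipK (\<Gamma>0 v) \<le> C * graph_norm DT T v"
proof -
  obtain C where "\<And>v. v \<in> dom_Tstar \<Longrightarrow> dual_norm K ipK (\<Gamma>0 v) \<le> C * graph_norm DT T v"
    using \<Gamma>0_bdd by blast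
  then show ?thesis
    using graph_norm_nonneg by (rule nonneg_bound_constant)
qed

lemma dom_A_closed:
  assumes X: "\<forall>n. X n \<in> dom_A" and l: "l \<in> H1" and lim: "(\<lambda>n. ip_norm ip1 (X n - l)) \<longlonglongrightarrow> 0"
  shows "l \<in> dom_A"
proof -
  obtain C where C: "\<And>u. u \<in> H1 \<Longrightarrow> ip_norm ipK (\<gamma>0 u) \<le> C * ip_norm ip1 u"
    using \<gamma>0_bdd by blast
  have "ip_norm ipK (\<gamma>0 l) \<le> C * ip_norm ip1 (X n - l)" for n
  proof -
    have Xn: "X n \<in> H1" "\<gamma>0 (X n) = 0"
      using X by auto
    then have "\<gamma>0 (X n - l) = - \<gamma>0 l"
      using lin_on_diff[OF \<gamma>0_lin Xn(1) l] by simp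
    then have "ip_norm ipK (\<gamma>0 l) = ip_norm ipK (\<gamma>0 (X n - l))"
      using K.nm_minus[OF \<gamma>0_K[OF l]] by simp
    also have "\<dots> \<le> C * ip_norm ip1 (X n - l)"
      using C[OF H.mem_diff[OF Xn(1) l]] .
    finally show ?thesis .
  qed
  moreover have "(\<lambda>n. C * ip_norm ip1 (X n - l)) \<longlonglongrightarrow> 0"
    using tendsto_mult_right_zero[OF lim] .
  ultimately have "ip_norm ipK (\<gamma>0 l) \<le> 0"
    using LIMSEQ_le_const[of _ 0 "ip_norm ipK (\<gamma>0 l)"] by blast
  then have "\<gamma>0 l = 0"
    using K.nm_nonneg[OF \<gamma>0_K[OF l]] K.nm_eq_zero_iff[OF \<gamma>0_K[OF l]] by simp
  then show ?thesis
    using l by simp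
qed

lemma dom_A_csubspace: "csubspace dom_A"
  unfolding csubspace_def
  using H.mem_zero H.mem_add H.mem_scaleC lin_on_zero[OF \<gamma>0_lin] lin_on_add[OF \<gamma>0_lin]
    lin_on_scaleC[OF \<gamma>0_lin] by simp

lemma B_bounded_H1: "\<exists>C. \<forall>x. ip_norm ip1 (B x) \<le> C * norm x"
proof -
  obtain C where C: "\<And>u. u \<in> H1 \<Longrightarrow> norm (Tstar u) \<le> C * ip_norm ip1 u"
    using Tstar_bdd by blast
  show ?thesis
  proof (rule own_hilbert_bounded_right_inverse[where S = Tstar and D = dom_A and C = C])
    show "l \<in> dom_A" if "\<forall>n. X n \<in> dom_A" "l \<in> H1" "(\<lambda>n. ip_norm ip1 (X n - l)) \<longlonglongrightarrow> 0" for X l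
      using that by (rule dom_A_closed)
    show "Tstar (x + y) = Tstar x + Tstar y" if "x \<in> H1" "y \<in> H1" for x y
      using adj_add[OF T_dense] H1_dom_Tstar that by blast
    show "B (Tstar u) = u" if "u \<in> dom_A" for u
      using B_Tstar that by simp
    show "dom_A \<subseteq> H1"
      by blast
  qed (fact H1_hilb dom_A_csubspace C B_lin B_dom_A Tstar_B)+
qed

lemma \<gamma>1_B_bounded: "\<exists>C\<ge>0. \<forall>x. ip_norm ipK (\<gamma>1 (B x)) \<le> C * norm x"
proof -
  obtain C1' where "\<And>u. u \<in> H1 \<Longrightarrow> ip_norm ipK (\<gamma>1 u) \<le> C1' * ip_norm ip1 u"
    using \<gamma>1_bdd by blast
  from nonneg_bound_constant[of H1 "\<lambda>u. ip_norm ipK (\<gamma>1 u)", OF this H.nm_nonneg]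
  obtain C1 where C1: "C1 \<ge> 0" "\<forall>u\<in>H1. ip_norm ipK (\<gamma>1 u) \<le> C1 * ip_norm ip1 u"
    by blast
  obtain CB' where "\<And>x. ip_norm ip1 (B x) \<le> CB' * norm x"
    using B_bounded_H1 by blast
  from nonneg_bound_constant[of UNIV "\<lambda>x. ip_norm ip1 (B x)", OF this norm_ge_zero]
  obtain CB where CB: "CB \<ge> 0" "\<forall>x\<in>UNIV. ip_norm ip1 (B x) \<le> CB * norm x"
    by blast
  have "ip_norm ipK (\<gamma>1 (B x)) \<le> C1 * (CB * norm x)" for x
  proof -
    have "ip_norm ipK (\<gamma>1 (B x)) \<le> C1 * ip_norm ip1 (B x)"
      using C1(2) B_H1 by blast
    also have "\<dots> \<le> C1 * (CB * norm x)"
      using CB(2) C1(1) by (simp add: mult_left_mono)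
    finally show ?thesis .
  qed
  then show ?thesis
    using C1(1) CB(1) by (intro exI[of _ "C1 * CB"]) (simp add: mult.assoc)
qed

lemma graph_dense_vanishing:
  assumes zero: "\<And>w. w \<in> H1 \<Longrightarrow> g w = 0"
    and lipschitz: "\<And>w w'. w \<in> dom_Tstar \<Longrightarrow> w' \<in> dom_Tstar \<Longrightarrow> cmod (g w - g w') \<le> L * graph_norm DT T (w - w')"
    and v: "v \<in> dom_Tstar"
  shows "g v = 0"
proof -
  have "cmod (g v) \<le> 0 + e" if e: "e > 0" for e
  proof -
    obtain w where w: "w \<in> H1" "graph_norm DT T (v - w) < e / (\<bar>L\<bar> + 1)"
      using H1_graph_dense v e by (metis divide_pos_pos abs_ge_zero add_nonneg_pos zero_less_one)
    have "cmod (g v) = cmod (g v - g w)"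
      using zero[OF w(1)] by simp
    also have "\<dots> \<le> \<bar>L\<bar> * graph_norm DT T (v - w)"
      using lipschitz[OF v H1_dom_Tstar[OF w(1)]] graph_norm_nonneg[of DT T "v - w"]
      by (smt (verit) mult_right_mono abs_ge_self)
    also have "\<dots> \<le> (\<bar>L\<bar> + 1) * (e / (\<bar>L\<bar> + 1))"
      using w(2) graph_norm_nonneg[of DT T "v - w"] by (intro mult_mono) auto
    finally show ?thesis
      by simp
  qed
  then show ?thesis
    using field_le_epsilon[of "cmod (g v)" 0] by simp
qed

lemma green_defect_bounded:
  assumes u: "u \<in> H1"
  shows "\<exists>L. \<forall>d\<in>dom_Tstar.
    cmod (cinner (Tstar d) u - cinner d (Tstar u) + \<Gamma>0 d (\<gamma>1 u)) \<le> L * graph_norm DT T d"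
proof -
  have \<gamma>1u: "\<gamma>1 u \<in> K"
    using \<gamma>1_K[OF u] .
  obtain CT where CT: "CT \<ge> 0" "\<And>v. v \<in> dom_Tstar \<Longrightarrow> dual_norm K ipK (\<Gamma>0 v) \<le> CT * graph_norm DT T v"
    using \<Gamma>0_bounded by blast
  have "cmod (cinner (Tstar d) u - cinner d (Tstar u) + \<Gamma>0 d (\<gamma>1 u))
      \<le> (norm u + norm (Tstar u) + CT * ip_norm ipK (\<gamma>1 u)) * graph_norm DT T d"
    if d: "d \<in> dom_Tstar" for d
  proof -
    have "cmod (cinner (Tstar d) u - cinner d (Tstar u) + \<Gamma>0 d (\<gamma>1 u))
        \<le> cmod (cinner (Tstar d) u) + cmod (cinner d (Tstar u)) + cmod (\<Gamma>0 d (\<gamma>1 u))"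
      by (smt (verit) norm_triangle_ineq norm_triangle_ineq4)
    also have "\<dots> \<le> graph_norm DT T d * norm u + graph_norm DT T d * norm (Tstar u)
        + CT * graph_norm DT T d * ip_norm ipK (\<gamma>1 u)"
    proof (intro add_mono)
      show "cmod (cinner (Tstar d) u) \<le> graph_norm DT T d * norm u"
        using norm_cinner_le[of "Tstar d" u] norm_adj_le_graph_norm[of DT T d]
        by (meson mult_right_mono norm_ge_zero order_trans)
      show "cmod (cinner d (Tstar u)) \<le> graph_norm DT T d * norm (Tstar u)"
        using norm_cinner_le[of d "Tstar u"] norm_le_graph_norm[of d DT T]
        by (meson mult_right_mono norm_ge_zero order_trans)
      show "cmod (\<Gamma>0 d (\<gamma>1 u)) \<le> CT * graph_norm DT T d * ip_norm ipK (\<gamma>1 u)"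
        using K.norm_le_dual_norm[OF \<Gamma>0_antidual[OF d] \<gamma>1u] CT(2)[OF d] K.nm_nonneg[OF \<gamma>1u]
        by (meson mult_right_mono order_trans)
    qed
    finally show ?thesis
      by (simp add: algebra_simps)
  qed
  then show ?thesis
    by blast
qed

lemma green_extended:
  assumes v: "v \<in> dom_Tstar" and u: "u \<in> dom_A"
  shows "cinner (Tstar v) u - cinner v (Tstar u) = - \<Gamma>0 v (\<gamma>1 u)"
proof -
  have uH: "u \<in> H1" and \<gamma>0u: "\<gamma>0 u = 0"
    using u by auto
  define g where "g w = cinner (Tstar w) u - cinner w (Tstar u) + \<Gamma>0 w (\<gamma>1 u)" for w
  obtain L where L: "\<And>d. d \<in> dom_Tstar \<Longrightarrow> cmod (g d) \<le> L * graph_norm DT T d"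
    using green_defect_bounded[OF uH] unfolding g_def by blast
  have "g v = 0"
  proof (rule graph_dense_vanishing[OF _ _ v])
    show "g w = 0" if "w \<in> H1" for w
      using lagrange that uH \<gamma>0u \<Gamma>0_H1[OF that \<gamma>1_K[OF uH]] by (simp add: g_def)
    show "cmod (g w - g w') \<le> L * graph_norm DT T (w - w')"
      if w: "w \<in> dom_Tstar" and w': "w' \<in> dom_Tstar" for w w'
    proof -
      have "g w - g w' = g (w - w')"
        unfolding g_def adj_diff[OF T_dense w w'] \<Gamma>0_diff[OF w w'] by (simp add: cinner_diff_left)
      then show ?thesis
        using L[OF adj_dom_diff[OF T_dense w w']] by simp
    qed
  qed
  then show ?thesis
    unfolding g_def by (simp add: algebra_simps)
qed

lemma ker_Tstar_repr: "v \<in> ker_Tstar \<Longrightarrow> cinner v w = \<Gamma>0 v (\<gamma>1 (B w))"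
  using green_extended[OF _ B_dom_A, of v w] Tstar_B by simp

lemma ker_Tstar_inj:
  assumes "v \<in> ker_Tstar" "v' \<in> ker_Tstar" and "\<Gamma>0 v = \<Gamma>0 v'"
  shows "v = v'"
proof -
  have "cinner (v - v') (v - v') = 0"
    using ker_Tstar_repr[OF assms(1)] ker_Tstar_repr[OF assms(2)] assms(3)
    by (simp add: cinner_diff_left)
  then show ?thesis
    unfolding cinner_self by simp
qed

lemma ker_Tstar_norm_le: "\<exists>C\<ge>0. \<forall>v\<in>ker_Tstar. norm v \<le> C * dual_norm K ipK (\<Gamma>0 v)"
proof -
  obtain C where C: "C \<ge> 0" "\<And>x. ip_norm ipK (\<gamma>1 (B x)) \<le> C * norm x"
    using \<gamma>1_B_bounded by blast
  have "norm v \<le> C * dual_norm K ipK (\<Gamma>0 v)" if v: "v \<in> ker_Tstar" for v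
  proof -
    have dn: "0 \<le> dual_norm K ipK (\<Gamma>0 v)"
      using K.dual_norm_nonneg \<Gamma>0_antidual v by blast
    have "norm v * norm v = cmod (cinner v v)"
      unfolding cinner_self norm_of_real by (simp add: power2_eq_square)
    also have "\<dots> = cmod (\<Gamma>0 v (\<gamma>1 (B v)))"
      by (simp only: ker_Tstar_repr[OF v])
    also have "\<dots> \<le> dual_norm K ipK (\<Gamma>0 v) * ip_norm ipK (\<gamma>1 (B v))"
      using K.norm_le_dual_norm \<Gamma>0_antidual \<gamma>1_K[OF B_H1] v by blast
    also have "\<dots> \<le> dual_norm K ipK (\<Gamma>0 v) * (C * norm v)"
      using C(2) dn by (rule mult_left_mono)
    finally have "norm v * norm v \<le> (C * dual_norm K ipK (\<Gamma>0 v)) * norm v"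
      by (simp add: mult_ac)
    then show ?thesis
      using C(1) dn by (cases "v = 0") (simp_all add: mult_le_cancel_right)
  qed
  then show ?thesis
    using C(1) by blast
qed

lemma \<gamma>1_B_riesz:
  assumes \<phi>: "\<phi> \<in> antidual K ipK"
  shows "\<exists>v. \<forall>w. cinner v w = \<phi> (\<gamma>1 (B w))"
proof -
  obtain C where C: "C \<ge> 0" "\<And>x. ip_norm ipK (\<gamma>1 (B x)) \<le> C * norm x"
    using \<gamma>1_B_bounded by blast
  show ?thesis
  proof (rule riesz_representation)
    show "\<phi> (\<gamma>1 (B (x + y))) = \<phi> (\<gamma>1 (B x)) + \<phi> (\<gamma>1 (B y))" for x y
      using lin_on_add[OF B_lin] lin_on_add[OF \<gamma>1_lin B_H1 B_H1] antidual_add[OF \<phi> \<gamma>1_K \<gamma>1_K]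
        B_H1 by simp
    show "\<phi> (\<gamma>1 (B (c *\<^sub>C x))) = cnj c * \<phi> (\<gamma>1 (B x))" for c x
      using lin_on_scaleC[OF B_lin] lin_on_scaleC[OF \<gamma>1_lin B_H1] antidual_scaleC[OF \<phi> \<gamma>1_K]
        B_H1 by simp
    show "cmod (\<phi> (\<gamma>1 (B x))) \<le> (dual_norm K ipK \<phi> * C) * norm x" for x
      using order_trans[OF K.norm_le_dual_norm[OF \<phi> \<gamma>1_K[OF B_H1]]
          mult_left_mono[OF C(2) K.dual_norm_nonneg[OF \<phi>]]]
      by (simp add: mult.assoc)
  qed
qed

lemma
  assumes \<phi>: "\<phi> \<in> antidual K ipK" and v: "\<And>w. cinner v w = \<phi> (\<gamma>1 (B w))"
  shows riesz_in_ker_Tstar: "v \<in> ker_Tstar" and \<Gamma>0_riesz: "\<Gamma>0 v = \<phi>"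
proof -
  have orth: "cinner (T u) v = cinner u 0" if u: "u \<in> DT" for u
  proof -
    have u': "u \<in> H1" "\<gamma>0 u = 0" "\<gamma>1 u = 0"
      using DT_sub u by auto
    then have "B (T u) = u"
      using B_Tstar T_Tstar[OF u] by simp
    then have "cinner v (T u) = 0"
      using v[of "T u"] u'(3) K.antidual_zero[OF \<phi>] by simp
    then show ?thesis
      using cinner_commute[of "T u" v] by simp
  qed
  show v_ker: "v \<in> ker_Tstar"
    using adj_eqI[OF T_dense orth] by simp
  have "\<Gamma>0 v x = \<phi> x" for x
  proof (cases "x \<in> K")
    case True
    then obtain u where u: "u \<in> H1" "\<gamma>0 u = 0" "\<gamma>1 u = x"
      using \<gamma>_surj K.mem_zero by blast
    then have "B (Tstar u) = u"
      using B_Tstar by simp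
    then show ?thesis
      using ker_Tstar_repr[OF v_ker, of "Tstar u"] v[of "Tstar u"] u(3) by simp
  next
    case False
    then show ?thesis
      using antidual_outside[OF \<Gamma>0_antidual] antidual_outside[OF \<phi>] v_ker by simp
  qed
  then show "\<Gamma>0 v = \<phi>"
    by blast
qed

lemma ker_Tstar_surj:
  assumes \<phi>: "\<phi> \<in> antidual K ipK"
  shows "\<exists>v\<in>ker_Tstar. \<Gamma>0 v = \<phi>"
proof -
  obtain v where "\<And>w. cinner v w = \<phi> (\<gamma>1 (B w))"
    using \<gamma>1_B_riesz[OF \<phi>] by blast
  then show ?thesis
    using riesz_in_ker_Tstar[OF \<phi>] \<Gamma>0_riesz[OF \<phi>] by blast
qed

lemma ker_Tstar_top_iso: "top_iso \<Gamma>0 ker_Tstar (antidual K ipK) (graph_norm DT T) (dual_norm K ipK)"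
  unfolding top_iso_def
proof (intro conjI)
  have "inj_on \<Gamma>0 ker_Tstar"
    using ker_Tstar_inj by (rule inj_onI)
  moreover have "\<Gamma>0 ` ker_Tstar = antidual K ipK"
    using \<Gamma>0_antidual ker_Tstar_surj by blast
  ultimately show "bij_betw \<Gamma>0 ker_Tstar (antidual K ipK)"
    unfolding bij_betw_def by blast
  show "\<exists>C. \<forall>v\<in>ker_Tstar. dual_norm K ipK (\<Gamma>0 v) \<le> C * graph_norm DT T v"
    using \<Gamma>0_bounded by blast
  obtain C where "\<forall>v\<in>ker_Tstar. norm v \<le> C * dual_norm K ipK (\<Gamma>0 v)"
    using ker_Tstar_norm_le by blast
  then show "\<exists>C. \<forall>v\<in>ker_Tstar. graph_norm DT T v \<le> C * dual_norm K ipK (\<Gamma>0 v)"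
    using graph_norm_eq_norm by fastforce
qed

lemma dom_Tstar_decomposition:
  assumes v: "v \<in> dom_Tstar"
  shows "v - B (Tstar v) \<in> ker_Tstar" and "\<Gamma>0 (v - B (Tstar v)) = \<Gamma>0 v"
proof -
  have B: "B (Tstar v) \<in> dom_Tstar"
    using H1_dom_Tstar B_H1 by blast
  show "v - B (Tstar v) \<in> ker_Tstar"
    using adj_dom_diff[OF T_dense v B] adj_diff[OF T_dense v B] Tstar_B by simp
  show "\<Gamma>0 (v - B (Tstar v)) = \<Gamma>0 v"
    using \<Gamma>0_diff[OF v B] \<Gamma>0_dom_A[OF B_dom_A] by (simp add: fun_eq_iff)
qed

lemma Tstar_\<Gamma>0_bij: "bij_betw (\<lambda>v. (Tstar v, \<Gamma>0 v)) dom_Tstar (UNIV \<times> antidual K ipK)"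
  unfolding bij_betw_def
proof
  show "inj_on (\<lambda>v. (Tstar v, \<Gamma>0 v)) dom_Tstar"
  proof (rule inj_onI)
    fix v v'
    assume v: "v \<in> dom_Tstar" and v': "v' \<in> dom_Tstar" and eq: "(Tstar v, \<Gamma>0 v) = (Tstar v', \<Gamma>0 v')"
    have "0 \<in> ker_Tstar"
      using adj_dom_zero[OF T_dense] adj_zero[OF T_dense] by simp
    moreover have "v - v' \<in> ker_Tstar"
      using adj_dom_diff[OF T_dense v v'] adj_diff[OF T_dense v v'] eq by simp
    moreover have "\<Gamma>0 (v - v') = \<Gamma>0 0"
      using \<Gamma>0_diff[OF v v'] eq \<Gamma>0_dom_A[of 0] H.mem_zero lin_on_zero[OF \<gamma>0_lin]
      by (simp add: fun_eq_iff)
    ultimately show "v = v'"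
      using ker_Tstar_inj by fastforce
  qed
  show "(\<lambda>v. (Tstar v, \<Gamma>0 v)) ` dom_Tstar = UNIV \<times> antidual K ipK"
  proof (intro equalityI subsetI)
    fix p :: "'h \<times> ('k \<Rightarrow> complex)"
    assume "p \<in> UNIV \<times> antidual K ipK"
    then obtain h \<phi> where p: "p = (h, \<phi>)" and \<phi>: "\<phi> \<in> antidual K ipK"
      by blast
    obtain z where z: "z \<in> ker_Tstar" "\<Gamma>0 z = \<phi>"
      using ker_Tstar_surj[OF \<phi>] by blast
    have B: "B h \<in> dom_Tstar"
      using H1_dom_Tstar B_H1 by blast
    have "Tstar (B h + z) = h"
      using adj_add[OF T_dense B] z Tstar_B by simp
    moreover have "\<Gamma>0 (B h + z) = \<phi>"
      using \<Gamma>0_add B z \<Gamma>0_dom_A[OF B_dom_A] by (auto simp: fun_eq_iff)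
    ultimately show "p \<in> (\<lambda>v. (Tstar v, \<Gamma>0 v)) ` dom_Tstar"
      using adj_dom_add[OF T_dense B] z p by force
  qed (use \<Gamma>0_antidual in blast)
qed

lemma Tstar_\<Gamma>0_norm_le:
  "\<exists>C. \<forall>v\<in>dom_Tstar. sqrt ((norm (Tstar v))\<^sup>2 + (dual_norm K ipK (\<Gamma>0 v))\<^sup>2) \<le> C * graph_norm DT T v"
proof -
  obtain CT where CT: "\<forall>v\<in>dom_Tstar. dual_norm K ipK (\<Gamma>0 v) \<le> CT * graph_norm DT T v"
    using \<Gamma>0_bounded by blast
  have "sqrt ((norm (Tstar v))\<^sup>2 + (dual_norm K ipK (\<Gamma>0 v))\<^sup>2) \<le> (1 + CT) * graph_norm DT T v"
    if v: "v \<in> dom_Tstar" for v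
  proof -
    have "sqrt ((norm (Tstar v))\<^sup>2 + (dual_norm K ipK (\<Gamma>0 v))\<^sup>2)
        \<le> norm (Tstar v) + dual_norm K ipK (\<Gamma>0 v)"
      using K.dual_norm_nonneg[OF \<Gamma>0_antidual[OF v]] by (intro sqrt_sum_squares_le_sum) auto
    also have "\<dots> \<le> (1 + CT) * graph_norm DT T v"
      using norm_adj_le_graph_norm[of DT T v] bspec[OF CT v] by (simp add: algebra_simps)
    finally show ?thesis .
  qed
  then show ?thesis
    by blast
qed

lemma graph_norm_le_Tstar_\<Gamma>0:
  "\<exists>C. \<forall>v\<in>dom_Tstar. graph_norm DT T v \<le> C * sqrt ((norm (Tstar v))\<^sup>2 + (dual_norm K ipK (\<Gamma>0 v))\<^sup>2)"
proof -
  obtain CB' where "\<forall>x. norm (B x) \<le> CB' * norm x"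
    using B_bdd by blast
  from nonneg_bound_constant[of UNIV "\<lambda>x. norm (B x)" CB' norm] this
  obtain CB where CB: "CB \<ge> 0" "\<forall>x. norm (B x) \<le> CB * norm x"
    by auto
  obtain Cz where Cz: "Cz \<ge> 0" "\<forall>z\<in>ker_Tstar. norm z \<le> Cz * dual_norm K ipK (\<Gamma>0 z)"
    using ker_Tstar_norm_le by blast
  have "graph_norm DT T v \<le> (CB + Cz + 1) * sqrt ((norm (Tstar v))\<^sup>2 + (dual_norm K ipK (\<Gamma>0 v))\<^sup>2)"
    if v: "v \<in> dom_Tstar" for v
  proof -
    define r where "r = sqrt ((norm (Tstar v))\<^sup>2 + (dual_norm K ipK (\<Gamma>0 v))\<^sup>2)"
    have r: "norm (Tstar v) \<le> r" "dual_norm K ipK (\<Gamma>0 v) \<le> r"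
      unfolding r_def by (simp_all add: real_le_rsqrt)
    have "norm v \<le> norm (B (Tstar v)) + norm (v - B (Tstar v))"
      by (metis add_diff_cancel_left' diff_add_cancel norm_triangle_ineq)
    also have "\<dots> \<le> CB * r + Cz * r"
      using CB Cz dom_Tstar_decomposition[OF v] r
      by (intro add_mono; smt (verit) mult_left_mono norm_ge_zero)
    finally have "graph_norm DT T v \<le> CB * r + Cz * r + r"
      using graph_norm_le[of DT T v] r(1) by linarith
    then show ?thesis
      unfolding r_def by (simp add: algebra_simps)
  qed
  then show ?thesis
    by blast
qed

lemma Tstar_\<Gamma>0_top_iso:
  "top_iso (\<lambda>v. (Tstar v, \<Gamma>0 v)) dom_Tstar (UNIV \<times> antidual K ipK)
     (graph_norm DT T) (\<lambda>(h, f). sqrt ((norm h)\<^sup>2 + (dual_norm K ipK f)\<^sup>2))"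
  unfolding top_iso_def using Tstar_\<Gamma>0_bij Tstar_\<Gamma>0_norm_le graph_norm_le_Tstar_\<Gamma>0 by simp

end

theorem theorem4p5:
  fixes DT :: "'h::{complex_inner,complete_space} set" and T :: "'h \<Rightarrow> 'h"
    and H1 :: "'h set" and ip1 :: "'h \<Rightarrow> 'h \<Rightarrow> complex"
    and K :: "'k::{complex_inner,complete_space} set" and ipK :: "'k \<Rightarrow> 'k \<Rightarrow> complex"
    and \<gamma>0 \<gamma>1 :: "'h \<Rightarrow> 'k"
    and \<Gamma>0 :: "'h \<Rightarrow> ('k \<Rightarrow> complex)"
    and DA :: "'h set" and A :: "'h \<Rightarrow> 'h"
  assumes sepH0: "\<exists>S. countable S \<and> closure S = (UNIV :: 'h set)"
    and sepK: "\<exists>S. countable S \<and> closure S = (UNIV :: 'k set)"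
    and T_lin: "lin_on DT T"
    and T_closed: "closed_op DT T"
    and T_dense: "closure DT = UNIV"
    and T_sym: "symmetric_op DT T"
    and H1_hilb: "own_hilbert H1 ip1"
    and H1_dense: "closure H1 = UNIV"
    and H1_incl: "\<exists>C. \<forall>u\<in>H1. norm u \<le> C * ip_norm ip1 u"
    and K_hilb: "own_hilbert K ipK"
    and K_dense: "closure K = UNIV"
    and K_incl: "\<exists>C. \<forall>x\<in>K. norm x \<le> C * ip_norm ipK x"
    and H1_sub: "H1 \<subseteq> adj_dom DT T"
    and H1_graph_dense: "\<forall>v\<in>adj_dom DT T. \<forall>e>0. \<exists>u\<in>H1. graph_norm DT T (v - u) < e"
    and Tstar_bdd: "\<exists>C. \<forall>u\<in>H1. norm (adj DT T u) \<le> C * ip_norm ip1 u"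
    and \<gamma>0_map: "\<gamma>0 ` H1 \<subseteq> K" and \<gamma>1_map: "\<gamma>1 ` H1 \<subseteq> K"
    and \<gamma>0_lin: "lin_on H1 \<gamma>0" and \<gamma>1_lin: "lin_on H1 \<gamma>1"
    and \<gamma>0_bdd: "\<exists>C. \<forall>u\<in>H1. ip_norm ipK (\<gamma>0 u) \<le> C * ip_norm ip1 u"
    and \<gamma>1_bdd: "\<exists>C. \<forall>u\<in>H1. ip_norm ipK (\<gamma>1 u) \<le> C * ip_norm ip1 u"
    and \<gamma>_surj: "\<forall>a\<in>K. \<forall>b\<in>K. \<exists>u\<in>H1. \<gamma>0 u = a \<and> \<gamma>1 u = b"
    and ker_dense: "closure {u\<in>H1. \<gamma>0 u = 0 \<and> \<gamma>1 u = 0} = UNIV"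
    and DT_ker: "DT = {u\<in>H1. \<gamma>0 u = 0 \<and> \<gamma>1 u = 0}"
    and lagrange: "\<forall>u\<in>H1. \<forall>v\<in>H1.
        cinner (adj DT T u) v - cinner u (adj DT T v)
          = cinner (\<gamma>1 u) (\<gamma>0 v) - cinner (\<gamma>0 u) (\<gamma>1 v)"
    and \<Gamma>0_map: "\<forall>u\<in>adj_dom DT T. \<Gamma>0 u \<in> antidual K ipK"
    and \<Gamma>0_add: "\<forall>u\<in>adj_dom DT T. \<forall>v\<in>adj_dom DT T. \<forall>x. \<Gamma>0 (u + v) x = \<Gamma>0 u x + \<Gamma>0 v x"
    and \<Gamma>0_scale: "\<forall>c. \<forall>u\<in>adj_dom DT T. \<forall>x. \<Gamma>0 (c *\<^sub>C u) x = c * \<Gamma>0 u x"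
    and \<Gamma>0_bdd: "\<exists>C. \<forall>u\<in>adj_dom DT T. dual_norm K ipK (\<Gamma>0 u) \<le> C * graph_norm DT T u"
    and \<Gamma>0_ext: "\<forall>u\<in>H1. \<Gamma>0 u = emb K (\<gamma>0 u)"
    and A_sa: "self_adjoint_op DA A"
    and T_le_A: "op_le DT T DA A"
    and A_le_Tstar: "op_le DA A (adj_dom DT T) (adj DT T)"
    and DA_eq: "DA = {u\<in>H1. \<gamma>0 u = 0}"
    and A_inv: "\<exists>B. lin_on UNIV B \<and> (\<exists>C. \<forall>x. norm (B x) \<le> C * norm x)
                  \<and> (\<forall>x. B x \<in> DA \<and> A (B x) = x) \<and> (\<forall>u\<in>DA. B (A u) = u)"
  shows "top_iso \<Gamma>0 {v\<in>adj_dom DT T. adj DT T v = 0} (antidual K ipK)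
           (graph_norm DT T) (dual_norm K ipK)
       \<and> top_iso (\<lambda>v. (adj DT T v, \<Gamma>0 v)) (adj_dom DT T) (UNIV \<times> antidual K ipK)
           (graph_norm DT T) (\<lambda>(h, f). sqrt ((norm h)\<^sup>2 + (dual_norm K ipK f)\<^sup>2))"
proof -
  obtain B where B_lin: "lin_on UNIV B" and B_bdd: "\<exists>C. \<forall>x. norm (B x) \<le> C * norm x"
    and B_DA: "\<And>x. B x \<in> DA" and A_B: "\<And>x. A (B x) = x" and B_A: "\<And>u. u \<in> DA \<Longrightarrow> B (A u) = u"
    using A_inv by blast
  have A_Tstar: "A u = adj DT T u" if "u \<in> DA" for u
    using A_le_Tstar that unfolding op_le_def by blast
  interpret dirichlet_setting DT T H1 ip1 K ipK \<gamma>0 \<gamma>1 \<Gamma>0 B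
  proof unfold_locales
    show "DT \<subseteq> {u \<in> H1. \<gamma>0 u = 0 \<and> \<gamma>1 u = 0}"
      using DT_ker by simp
    show "T u = adj DT T u" if "u \<in> DT" for u
      using T_le_A A_Tstar that unfolding op_le_def by auto
    show "B x \<in> H1" "\<gamma>0 (B x) = 0" "adj DT T (B x) = x" for x
      using B_DA A_B A_Tstar DA_eq by auto
    show "B (adj DT T u) = u" if "u \<in> H1" "\<gamma>0 u = 0" for u
      using B_A A_Tstar DA_eq that by auto
  qed (fact assms B_lin B_bdd)+
  show ?thesis
    using ker_Tstar_top_iso Tstar_\<Gamma>0_top_iso by blast
qed

end
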